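(* Let $\mathfrak a=\mathbb H^p$, $\mathfrak z$ a $3$-dimensional real vector space, $A_s:\mathfrak z\to\mathrm{Im}\,\mathbb H$ ($s=1,\dots,p$) linear isomorphisms, $J_Z=\mathrm{diag}(L_{A_1Z},\dots,L_{A_pZ})$, $V=\{J_Z:Z\in\mathfrak z\}$, and suppose $(V,\langle\cdot,\cdot\rangle)$ is a WS-pair for some inner product. Then after an orthogonal change of coordinates in each factor $\mathbb H$ of $\mathbb H^p$ (by maps commuting with right multiplications), $V=\mathrm{Span}(J_1,J_2,J_3)$ with $J_1=\mathrm{diag}(\lambda_1L_{\mathrm i},\dots,\lambda_pL_{\mathrm i})$, $J_2=\mathrm{diag}(\mu_1L_{\mathrm j},\dots,\mu_pL_{\mathrm j})$, $J_3=\mathrm{diag}(\mu_1L_{\mathrm k},\dots,\mu_pL_{\mathrm k})$ for nonzero reals $\lambda_s,\mu_s$, and the inner product satisfies $J_1\perp J_2$, $J_1\perp J_3$, $J_2\perp J_3$ and $\|J_2\|=\|J_3\|$.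
   Context: $\mathbb H$ denotes the quaternions, $\mathrm i,\mathrm j,\mathrm k$ the standard basis of $\mathrm{Im}\,\mathbb H$, $L_q$ left multiplication, $\mathrm{diag}$ block-diagonal operators on $\mathbb H^p$. For a Euclidean space $\mathfrak a$, a subspace $V\subset\mathfrak{so}(\mathfrak a)$ with inner product $\langle\cdot,\cdot\rangle$ defines the metric 2-step nilpotent Lie algebra $\mathfrak n=V\oplus\mathfrak a$ (orthogonal sum, $V$ central, $\langle J,[X,Y]\rangle=\langle JX,Y\rangle$); it is a WS-pair if the corresponding simply connected nilpotent Lie group with left-invariant metric is weakly symmetric. Standing fact: this holds iff for every $J\in V$, $X\in\mathfrak a$ there is $N\in\mathcal N(V)=\{N\in O(\mathfrak a): NVN^{-1}\subset V$, $K\mapsto NKN^{-1}$ orthogonal on $(V,\langle\cdot,\cdot\rangle)\}$ with $NX=-X$, $NJ=-JN$. *)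

theory Defs
  imports "HOL-Analysis.Analysis"
begin

text \<open>Quaternions modelled as real^4 with components 1,2,3,4 = (re, i, j, k);
  the Euclidean inner product on real^4 is the standard inner product of H.\<close>

definition qmult :: "real^4 \<Rightarrow> real^4 \<Rightarrow> real^4" where
  "qmult x y = vector
     [x$1*y$1 - x$2*y$2 - x$3*y$3 - x$4*y$4,
      x$1*y$2 + x$2*y$1 + x$3*y$4 - x$4*y$3,
      x$1*y$3 - x$2*y$4 + x$3*y$1 + x$4*y$2,
      x$1*y$4 + x$2*y$3 - x$3*y$2 + x$4*y$1]"

definition qi :: "real^4" where "qi = vector [0, 1, 0, 0]"
definition qj :: "real^4" where "qj = vector [0, 0, 1, 0]"
definition qk :: "real^4" where "qk = vector [0, 0, 0, 1]"

definition ImH :: "(real^4) set" where "ImH = {q. q$1 = 0}"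

definition Lq :: "real^4 \<Rightarrow> real^4 \<Rightarrow> real^4" where "Lq q x = qmult q x"

definition qdiag :: "('p::finite \<Rightarrow> real^4 \<Rightarrow> real^4) \<Rightarrow> real^4^'p \<Rightarrow> real^4^'p" where
  "qdiag f x = (\<chi> s. f s (x$s))"

definition inner_product_on :: "('a::real_vector \<Rightarrow> 'a) set \<Rightarrow> (('a \<Rightarrow> 'a) \<Rightarrow> ('a \<Rightarrow> 'a) \<Rightarrow> real) \<Rightarrow> bool" where
  "inner_product_on V ip \<longleftrightarrow>
     (\<forall>J\<in>V. \<forall>K\<in>V. ip J K = ip K J) \<and>
     (\<forall>J\<in>V. \<forall>K\<in>V. \<forall>L\<in>V. ip (\<lambda>x. J x + K x) L = ip J L + ip K L) \<and>
     (\<forall>J\<in>V. \<forall>K\<in>V. \<forall>c::real. ip (\<lambda>x. c *\<^sub>R J x) K = c * ip J K) \<and>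
     (\<forall>J\<in>V. J \<noteq> (\<lambda>x. 0) \<longrightarrow> ip J J > 0)"

definition NV :: "('a::real_inner \<Rightarrow> 'a) set \<Rightarrow> (('a \<Rightarrow> 'a) \<Rightarrow> ('a \<Rightarrow> 'a) \<Rightarrow> real) \<Rightarrow> ('a \<Rightarrow> 'a) set" where
  "NV V ip = {N. orthogonal_transformation N \<and>
      (\<forall>K\<in>V. N \<circ> K \<circ> inv N \<in> V) \<and>
      (\<forall>K\<in>V. \<forall>L\<in>V. ip (N \<circ> K \<circ> inv N) (N \<circ> L \<circ> inv N) = ip K L)}"

text \<open>WS-pair, via the standing characterization of weak symmetry.\<close>
definition WS_pair :: "('a::real_inner \<Rightarrow> 'a) set \<Rightarrow> (('a \<Rightarrow> 'a) \<Rightarrow> ('a \<Rightarrow> 'a) \<Rightarrow> real) \<Rightarrow> bool" where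
  "WS_pair V ip \<longleftrightarrow>
     (\<forall>J\<in>V. \<forall>X. \<exists>N\<in>NV V ip. N X = - X \<and> N \<circ> J = (\<lambda>x. - J (N x)))"

end

theory Submission
  imports Defs "HOL-Analysis.Cross3"
begin

text \<open>Read the inner product of \<open>V\<close> in block \<open>s\<close> as a symmetric form \<open>g\<^sub>s\<close> on
  \<open>Im H = \<real>\<^sup>3\<close>. An element of \<open>N(V)\<close> reversing the unit quaternion of block \<open>s\<close> induces a
  rotation of \<open>Im H\<close> preserving \<open>g\<^sub>s\<close>; weak symmetry supplies one reversing any given
  vector, which is necessarily a half-turn, and its axis is an eigenvector of \<open>g\<^sub>s\<close>. Hence
  \<open>g\<^sub>s\<close> has an orthonormal eigenframe \<open>c1, c2, c3\<close> with equal eigenvalues on \<open>c2, c3\<close>.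

  If \<open>g\<^sub>s\<close> is not scalar, every half-turn about an axis orthogonal to \<open>c1\<close> is realised
  this way. Such an element only permutes the eigenvalues \<open>-|A\<^sub>t Z|\<^sup>2\<close> of \<open>J\<^sub>Z\<^sup>2\<close>, so by
  continuity each \<open>|A\<^sub>t A\<^sub>s\<^sup>-\<^sup>1 v|\<^sup>2\<close> is invariant under the quarter-turn about \<open>c1\<close>: every
  \<open>A\<^sub>t\<close> maps the frame to an orthogonal one with \<open>|A\<^sub>t c2| = |A\<^sub>t c3|\<close>. If all \<open>g\<^sub>t\<close> are
  scalar, any \<open>g\<^sub>s\<close>-eigenframe has this property anyway. Finally a unit quaternion in each
  block conjugates the three images to \<open>\<lambda> i, \<mu> j, \<mu> k\<close>, and left multiplication by it
  commutes with right multiplications.\<close>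

section \<open>Orthonormal frames and half-turns of Euclidean 3-space\<close>

definition orthonormal3 :: "real^3 \<Rightarrow> real^3 \<Rightarrow> real^3 \<Rightarrow> bool" where
  "orthonormal3 a b c \<longleftrightarrow> a\<bullet>a = 1 \<and> b\<bullet>b = 1 \<and> c\<bullet>c = 1 \<and> a\<bullet>b = 0 \<and> a\<bullet>c = 0 \<and> b\<bullet>c = 0"

lemma orthonormal3_permute:
  assumes "orthonormal3 a b c"
  shows "orthonormal3 b a c" "orthonormal3 c a b"
  using assms by (auto simp: orthonormal3_def inner_commute)

lemma orthonormal3_expand:
  assumes "orthonormal3 a b c"
  shows "x = (x\<bullet>a) *\<^sub>R a + (x\<bullet>b) *\<^sub>R b + (x\<bullet>c) *\<^sub>R c"
proof -
  define y where "y = x - ((x\<bullet>a) *\<^sub>R a + (x\<bullet>b) *\<^sub>R b + (x\<bullet>c) *\<^sub>R c)"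
  have y_orth: "y\<bullet>a = 0" "y\<bullet>b = 0" "y\<bullet>c = 0"
    using assms
    by (auto simp: orthonormal3_def y_def inner_diff_left inner_add_left
      inner_commute[of b a] inner_commute[of c a] inner_commute[of c b])
  have distinct: "a \<noteq> b" "a \<noteq> c" "b \<noteq> c" "a \<noteq> 0" "b \<noteq> 0" "c \<noteq> 0"
    using assms by (auto simp: orthonormal3_def)
  have "independent {a, b, c}"
    using assms distinct
    by (intro pairwise_orthogonal_independent)
       (auto simp: orthonormal3_def pairwise_def orthogonal_def inner_commute)
  moreover have "card {a, b, c} = 3"
    using distinct by auto
  ultimately have "UNIV \<subseteq> span {a, b, c}"
    by (intro card_ge_dim_independent) auto
  then have "y \<in> span {a, b, c}"
    by auto
  then have "orthogonal y y"
    by (rule orthogonal_to_span) (use y_orth in \<open>auto simp: orthogonal_def\<close>)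
  then have "y = 0"
    by (simp add: orthogonal_self)
  then show ?thesis
    by (simp add: y_def)
qed

lemma orthonormal3_inner:
  assumes "orthonormal3 a b c"
  shows "x \<bullet> y = (x\<bullet>a) * (y\<bullet>a) + (x\<bullet>b) * (y\<bullet>b) + (x\<bullet>c) * (y\<bullet>c)"
proof -
  have "x \<bullet> y = (x\<bullet>a) * (a\<bullet>y) + (x\<bullet>b) * (b\<bullet>y) + (x\<bullet>c) * (c\<bullet>y)"
    by (subst (1) orthonormal3_expand[OF assms, of x]) (simp add: inner_add_left)
  then show ?thesis
    by (simp add: inner_commute)
qed

lemma linear_eq_orthonormal3:
  assumes "linear f" "linear g" "orthonormal3 a b c" "f a = g a" "f b = g b" "f c = g c"
  shows "f = g"
proof
  fix x
  show "f x = g x"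
    by (subst (1 2) orthonormal3_expand[OF assms(3), of x])
       (simp add: linear_add[OF assms(1)] linear_add[OF assms(2)]
         linear_cmul[OF assms(1)] linear_cmul[OF assms(2)] assms(4-6))
qed

lemma cross3_cross3: "cross3 a (cross3 b c) = (a\<bullet>c) *\<^sub>R b - (a\<bullet>b) *\<^sub>R c"
  by (simp add: cross3_def inner_vec_def sum_3 vec_eq_iff forall_3 vector_def algebra_simps)

lemma inner_cross3_self: "cross3 a b \<bullet> cross3 a b = (a\<bullet>a) * (b\<bullet>b) - (a\<bullet>b)\<^sup>2"
  by (simp add: cross3_simps power2_eq_square)

lemma orthonormal3_cross3:
  assumes "a\<bullet>a = 1" "b\<bullet>b = 1" "a\<bullet>b = 0"
  shows "orthonormal3 a b (cross3 a b)"
  using assms by (simp add: orthonormal3_def inner_cross3_self dot_cross_self)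

lemma exists_unit_orthogonal:
  fixes u :: "real^3"
  assumes "u \<noteq> 0"
  obtains v where "v\<bullet>v = 1" "v\<bullet>u = 0"
proof -
  obtain w where w: "w \<noteq> 0" "w\<bullet>u = 0"
  proof (cases "cross3 u (axis 1 1) = 0")
    case False
    then show ?thesis
      by (intro that[of "cross3 u (axis 1 1)"]) (simp_all add: dot_cross_self)
  next
    case True
    have "cross3 u (axis 2 1) \<noteq> 0"
    proof
      assume "cross3 u (axis 2 1) = 0"
      with True have "u$1 = 0 \<and> u$2 = 0 \<and> u$3 = 0"
        by (auto simp: cross3_def vec_eq_iff forall_3 vector_def axis_def)
      with assms show False
        by (auto simp: vec_eq_iff forall_3)
    qed
    then show ?thesis
      by (intro that[of "cross3 u (axis 2 1)"]) (simp_all add: dot_cross_self)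
  qed
  then show ?thesis
    by (intro that[of "w /\<^sub>R norm w"]) (simp_all add: dot_square_norm power2_eq_square)
qed

lemma orthogonal_transformation_iff_inner:
  fixes f :: "'a::real_inner \<Rightarrow> 'a"
  shows "orthogonal_transformation f \<longleftrightarrow> (\<forall>v w. f v \<bullet> f w = v \<bullet> w)"
proof
  assume inner: "\<forall>v w. f v \<bullet> f w = v \<bullet> w"
  have "linear f"
  proof
    fix a b
    have "(f (a + b) - f a - f b) \<bullet> (f (a + b) - f a - f b) = ((a + b) - a - b) \<bullet> ((a + b) - a - b)"
      by (simp only: inner_diff_left inner_diff_right inner)
    then have "f (a + b) - f a - f b = 0"
      by simp
    then show "f (a + b) = f a + f b"
      by (simp add: algebra_simps)
  next
    fix r a
    have "(f (r *\<^sub>R a) - r *\<^sub>R f a) \<bullet> (f (r *\<^sub>R a) - r *\<^sub>R f a) = (r *\<^sub>R a - r *\<^sub>R a) \<bullet> (r *\<^sub>R a - r *\<^sub>R a)"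
      by (simp only: inner_diff_left inner_diff_right inner_scaleR_left inner_scaleR_right inner) simp
    then show "f (r *\<^sub>R a) = r *\<^sub>R f a"
      by simp
  qed
  with inner show "orthogonal_transformation f"
    by (simp add: orthogonal_transformation_def)
qed (simp add: orthogonal_transformation_def)

definition half_turn :: "real^3 \<Rightarrow> real^3 \<Rightarrow> real^3" where
  "half_turn c y = (2 * (y\<bullet>c)) *\<^sub>R c - y"

lemma linear_half_turn: "linear (half_turn c)"
  by (rule linearI) (simp_all add: half_turn_def inner_add_left algebra_simps)

lemma half_turn_axis: "c\<bullet>c = 1 \<Longrightarrow> half_turn c c = c"
  by (simp add: half_turn_def scaleR_2)

lemma half_turn_orthogonal: "y\<bullet>c = 0 \<Longrightarrow> half_turn c y = - y"
  by (simp add: half_turn_def)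

lemma half_turn_half_turn: "c\<bullet>c = 1 \<Longrightarrow> half_turn c (half_turn c y) = y"
  by (simp add: half_turn_def inner_diff_left algebra_simps)

text \<open>A map on the plane \<open>span {b, w}\<close> with matrix \<open>[[\<alpha>, \<beta>], [\<beta>, -\<alpha>]]\<close>
  is a reflection; its mirror line is the axis of the half-turn.\<close>
lemma half_turn_of_plane_reflection:
  assumes lin: "linear \<tau>" and frame: "orthonormal3 a b w"
    and \<tau>a: "\<tau> a = - a" and \<tau>b: "\<tau> b = \<alpha> *\<^sub>R b + \<beta> *\<^sub>R w" and \<tau>w: "\<tau> w = \<beta> *\<^sub>R b - \<alpha> *\<^sub>R w"
    and circle: "\<alpha>\<^sup>2 + \<beta>\<^sup>2 = 1"
  obtains c where "c\<bullet>c = 1" "c\<bullet>a = 0" "\<tau> = half_turn c"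
proof (cases "\<alpha> = -1")
  case True
  then have "\<beta> = 0"
    using circle by (simp add: power2_eq_square)
  then have "half_turn w a = \<tau> a" "half_turn w b = \<tau> b" "half_turn w w = \<tau> w"
    using frame \<tau>a \<tau>b \<tau>w True
    by (simp_all add: orthonormal3_def half_turn_axis half_turn_orthogonal)
  then have "\<tau> = half_turn w"
    by (intro linear_eq_orthonormal3[OF lin linear_half_turn frame]) simp_all
  with frame show ?thesis
    by (intro that[of w]) (auto simp: orthonormal3_def inner_commute)
next
  case False
  have "\<alpha>\<^sup>2 \<le> 1"
    using circle zero_le_power2[of \<beta>] by linarith
  then have "- 1 \<le> \<alpha>"
    by (simp add: abs_square_le_1 abs_le_iff)
  with False have pos: "1 + \<alpha> > 0"
    by linarith
  define f where "f = (1 + \<alpha>) *\<^sub>R b + \<beta> *\<^sub>R w"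
  have f_inner: "f\<bullet>a = 0" "f\<bullet>b = 1 + \<alpha>" "f\<bullet>w = \<beta>"
    using frame by (auto simp: orthonormal3_def f_def inner_add_left inner_add_right inner_commute)
  have ff: "f\<bullet>f = 2 * (1 + \<alpha>)"
    using circle by (subst (2) f_def) (simp add: inner_add_right f_inner power2_eq_square algebra_simps)
  define c where "c = (1 / sqrt (2 * (1 + \<alpha>))) *\<^sub>R f"
  have cc: "c\<bullet>c = 1" and ca: "c\<bullet>a = 0"
    using pos ff f_inner by (simp_all add: c_def)
  have ht: "half_turn c y = ((y\<bullet>f) / (1 + \<alpha>)) *\<^sub>R f - y" for y
    using pos by (simp add: half_turn_def c_def field_simps)
  have "half_turn c b = f - b"
    using pos by (simp add: ht inner_commute[of b f] f_inner)
  then have "half_turn c b = \<tau> b"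
    by (simp add: f_def \<tau>b algebra_simps)
  moreover have "half_turn c w = \<tau> w"
  proof -
    have coef: "\<beta> / (1 + \<alpha>) * (1 + \<alpha>) = \<beta>" "\<beta> / (1 + \<alpha>) * \<beta> = 1 - \<alpha>"
      using pos circle by (simp_all add: field_simps power2_eq_square)
    have "half_turn c w = (\<beta> / (1 + \<alpha>)) *\<^sub>R f - w"
      by (simp add: ht inner_commute[of w f] f_inner)
    also have "\<dots> = \<beta> *\<^sub>R b + (1 - \<alpha>) *\<^sub>R w - w"
      unfolding f_def scaleR_add_right scaleR_scaleR coef ..
    finally show ?thesis
      by (simp add: \<tau>w algebra_simps)
  qed
  moreover have "half_turn c a = \<tau> a"
    using ca by (simp add: \<tau>a half_turn_orthogonal inner_commute[of a c])
  ultimately have "\<tau> = half_turn c"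
    by (intro linear_eq_orthonormal3[OF lin linear_half_turn frame]) simp_all
  with cc ca show ?thesis
    using that by blast
qed

lemma cross_preserving_reversal_is_half_turn:
  assumes orth: "orthogonal_transformation \<tau>"
    and cross: "\<And>x y. \<tau> (cross3 x y) = cross3 (\<tau> x) (\<tau> y)"
    and \<tau>u: "\<tau> u = - u" and u: "u \<noteq> 0"
  obtains c where "c\<bullet>c = 1" "c\<bullet>u = 0" "\<tau> = half_turn c"
proof -
  have lin: "linear \<tau>"
    using orth by (rule orthogonal_transformation_linear)
  define a where "a = u /\<^sub>R norm u"
  have aa: "a\<bullet>a = 1"
    using u by (simp add: a_def dot_square_norm power2_eq_square)
  have \<tau>a: "\<tau> a = - a"
    using \<tau>u by (simp add: a_def linear_cmul[OF lin])
  obtain b where bb: "b\<bullet>b = 1" and "b\<bullet>u = 0"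
    using exists_unit_orthogonal[OF u] by blast
  then have ab: "a\<bullet>b = 0"
    by (simp add: a_def inner_commute)
  define w where "w = cross3 a b"
  have frame: "orthonormal3 a b w"
    unfolding w_def using aa bb ab by (rule orthonormal3_cross3)
  define \<alpha> \<beta> where "\<alpha> = \<tau> b \<bullet> b" and "\<beta> = \<tau> b \<bullet> w"
  have "\<tau> b \<bullet> \<tau> a = b \<bullet> a"
    using orth by (simp add: orthogonal_transformation_def)
  then have "\<tau> b \<bullet> a = 0"
    using ab by (simp add: \<tau>a inner_commute)
  then have \<tau>b: "\<tau> b = \<alpha> *\<^sub>R b + \<beta> *\<^sub>R w"
    using orthonormal3_expand[OF frame, of "\<tau> b"] by (simp add: \<alpha>_def \<beta>_def)
  have "\<alpha>\<^sup>2 + \<beta>\<^sup>2 = \<tau> b \<bullet> \<tau> b"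
    using frame by (subst (1 2) \<tau>b)
      (simp add: orthonormal3_def inner_add_left inner_add_right inner_commute power2_eq_square)
  then have circle: "\<alpha>\<^sup>2 + \<beta>\<^sup>2 = 1"
    using orth bb by (simp add: orthogonal_transformation_def)
  have "\<tau> w = cross3 (- a) (\<alpha> *\<^sub>R b + \<beta> *\<^sub>R w)"
    by (simp add: w_def cross \<tau>a \<tau>b)
  also have "\<dots> = \<beta> *\<^sub>R b - \<alpha> *\<^sub>R w"
    using aa ab by (simp add: cross_add_right cross_mult_right w_def cross3_cross3 algebra_simps)
  finally have \<tau>w: "\<tau> w = \<beta> *\<^sub>R b - \<alpha> *\<^sub>R w" .
  obtain c where "c\<bullet>c = 1" "c\<bullet>a = 0" "\<tau> = half_turn c"
    using half_turn_of_plane_reflection[OF lin frame \<tau>a \<tau>b \<tau>w circle] .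
  with u show ?thesis
    by (intro that[of c]) (simp_all add: a_def)
qed

lemma half_turn_quarter_turn:
  assumes frame: "orthonormal3 c1 c2 c3"
  defines "h \<equiv> (sqrt 2 / 2) *\<^sub>R (c2 + c3)"
  shows "half_turn h (half_turn c2 c1) = c1" "half_turn h (half_turn c2 c2) = c3"
    "half_turn h (half_turn c2 c3) = - c2"
proof -
  have h: "half_turn h y = (y \<bullet> (c2 + c3)) *\<^sub>R (c2 + c3) - y" for y
    by (simp add: half_turn_def h_def algebra_simps)
  have "half_turn c2 c1 = - c1" "half_turn c2 c2 = c2" "half_turn c2 c3 = - c3"
    using frame by (simp_all add: half_turn_orthogonal half_turn_axis orthonormal3_def inner_commute)
  then show "half_turn h (half_turn c2 c1) = c1" "half_turn h (half_turn c2 c2) = c3"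
    "half_turn h (half_turn c2 c3) = - c2"
    using frame by (simp_all add: h orthonormal3_def inner_add_right inner_commute)
qed

lemma inner_invariant_if_quadratic_invariant:
  fixes \<rho> :: "'a::real_vector \<Rightarrow> 'a" and M :: "'a \<Rightarrow> 'b::real_inner"
  assumes "linear \<rho>" "linear M" and quadratic: "\<And>x. M (\<rho> x) \<bullet> M (\<rho> x) = M x \<bullet> M x"
  shows "M (\<rho> x) \<bullet> M (\<rho> y) = M x \<bullet> M y"
proof -
  have expand: "M (u + v) \<bullet> M (u + v) = M u \<bullet> M u + 2 * (M u \<bullet> M v) + M v \<bullet> M v" for u v
    by (simp add: linear_add[OF assms(2)] inner_add_left inner_add_right inner_commute)
  show ?thesis
    using quadratic[of "x + y"] quadratic[of x] quadratic[of y] expand[of x y] expand[of "\<rho> x" "\<rho> y"]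
    by (simp add: linear_add[OF assms(1)])
qed

text \<open>If \<open>|M v|\<^sup>2\<close> takes only finitely many values along the continuous family of
  half-turns about the axes \<open>cos \<theta> c2 + sin \<theta> c3\<close>, it is invariant under composites of
  two of them, in particular under the quarter-turn about \<open>c1\<close>.\<close>
lemma quarter_turn_invariance:
  fixes M :: "real^3 \<Rightarrow> 'a::real_inner"
  assumes lin: "linear M" and frame: "orthonormal3 c1 c2 c3"
    and finite_values: "\<And>y. \<exists>S. finite S \<and>
      (\<forall>\<theta>. M (half_turn (cos \<theta> *\<^sub>R c2 + sin \<theta> *\<^sub>R c3) y) \<bullet> M (half_turn (cos \<theta> *\<^sub>R c2 + sin \<theta> *\<^sub>R c3) y) \<in> S)"
  shows "M c1 \<bullet> M c2 = 0" "M c1 \<bullet> M c3 = 0" "M c2 \<bullet> M c3 = 0" "M c2 \<bullet> M c2 = M c3 \<bullet> M c3"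
proof -
  define Q where "Q v = M v \<bullet> M v" for v
  define axis_at where "axis_at \<theta> = cos \<theta> *\<^sub>R c2 + sin \<theta> *\<^sub>R c3" for \<theta>
  have along_family: "Q (half_turn (axis_at (pi / 4)) y) = Q (half_turn (axis_at 0) y)" for y
  proof -
    obtain S where S: "finite S" "\<And>\<theta>. Q (half_turn (axis_at \<theta>) y) \<in> S"
      using finite_values[of y] unfolding Q_def axis_at_def by blast
    have "continuous_on UNIV M"
      by (rule linear_continuous_on) (rule linear_conv_bounded_linear[THEN iffD1, OF lin])
    moreover have "continuous_on UNIV (\<lambda>\<theta>. half_turn (axis_at \<theta>) y)"
      unfolding half_turn_def axis_at_def by (intro continuous_intros)
    ultimately have "continuous_on UNIV (\<lambda>\<theta>. M (half_turn (axis_at \<theta>) y))"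
      by (rule continuous_on_compose2) simp
    then have "continuous_on UNIV (\<lambda>\<theta>. Q (half_turn (axis_at \<theta>) y))"
      unfolding Q_def by (intro continuous_on_inner)
    moreover have "finite (range (\<lambda>\<theta>. Q (half_turn (axis_at \<theta>) y)))"
      by (rule finite_subset[OF _ S(1)]) (use S(2) in blast)
    ultimately have "(\<lambda>\<theta>. Q (half_turn (axis_at \<theta>) y)) constant_on UNIV"
      by (intro continuous_finite_range_constant) simp_all
    then show ?thesis
      by (auto simp: constant_on_def)
  qed
  define \<rho> where "\<rho> = half_turn (axis_at (pi / 4)) \<circ> half_turn c2"
  have axis_at_values: "axis_at 0 = c2" "axis_at (pi / 4) = (sqrt 2 / 2) *\<^sub>R (c2 + c3)"
    by (simp_all add: axis_at_def cos_45 sin_45 scaleR_add_right)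
  have c2c2: "c2\<bullet>c2 = 1"
    using frame by (simp add: orthonormal3_def)
  have "Q (\<rho> x) = Q x" for x
    using along_family[of "half_turn c2 x"] by (simp add: \<rho>_def axis_at_values half_turn_half_turn[OF c2c2])
  moreover have "linear \<rho>"
    unfolding \<rho>_def by (intro linear_compose linear_half_turn)
  ultimately have preserved: "M (\<rho> x) \<bullet> M (\<rho> y) = M x \<bullet> M y" for x y
    using inner_invariant_if_quadratic_invariant[of \<rho> M] lin by (simp add: Q_def)
  have \<rho>: "\<rho> c1 = c1" "\<rho> c2 = c3" "\<rho> c3 = - c2"
    using half_turn_quarter_turn[OF frame] by (simp_all add: \<rho>_def axis_at_values)
  have "M c2 \<bullet> M c3 = - (M c3 \<bullet> M c2)" "M c1 \<bullet> M c3 = M c1 \<bullet> M c2" "M c1 \<bullet> M c2 = - (M c1 \<bullet> M c3)"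
    "M c3 \<bullet> M c3 = M c2 \<bullet> M c2"
    using preserved[of c2 c3] preserved[of c1 c2] preserved[of c1 c3] preserved[of c2 c2]
    by (simp_all add: \<rho> linear_neg[OF lin])
  then show "M c1 \<bullet> M c2 = 0" "M c1 \<bullet> M c3 = 0" "M c2 \<bullet> M c3 = 0" "M c2 \<bullet> M c2 = M c3 \<bullet> M c3"
    by (simp_all add: inner_commute)
qed

section \<open>Symmetric bilinear forms on Euclidean 3-space\<close>

lemma bilinear_frame_expand:
  assumes "bilinear g" "orthonormal3 c1 c2 c3"
  shows "g v w = (w\<bullet>c1) * g v c1 + (w\<bullet>c2) * g v c2 + (w\<bullet>c3) * g v c3"
  by (subst orthonormal3_expand[OF assms(2), of w])
     (simp add: bilinear_radd[OF assms(1)] bilinear_rmul[OF assms(1)])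

definition adapted_frame :: "(real^3 \<Rightarrow> real^3 \<Rightarrow> real) \<Rightarrow> real^3 \<Rightarrow> real^3 \<Rightarrow> real^3 \<Rightarrow> bool" where
  "adapted_frame g c1 c2 c3 \<longleftrightarrow> orthonormal3 c1 c2 c3 \<and>
     g c1 c2 = 0 \<and> g c1 c3 = 0 \<and> g c2 c3 = 0 \<and> g c2 c2 = g c3 c3"

lemma adapted_frame_form:
  assumes bil: "bilinear g" and sym: "\<And>x y. g x y = g y x" and adapted: "adapted_frame g c1 c2 c3"
  shows "g v w = (g c1 c1 - g c2 c2) * ((v\<bullet>c1) * (w\<bullet>c1)) + g c2 c2 * (v\<bullet>w)"
proof -
  have frame: "orthonormal3 c1 c2 c3"
    using adapted by (simp add: adapted_frame_def)
  have "g c1 v = (v\<bullet>c1) * g c1 c1" "g c2 v = (v\<bullet>c2) * g c2 c2" "g c3 v = (v\<bullet>c3) * g c2 c2"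
    using bilinear_frame_expand[OF bil frame, of c1 v] bilinear_frame_expand[OF bil frame, of c2 v]
      bilinear_frame_expand[OF bil frame, of c3 v] adapted sym[of c2 c1] sym[of c3 c1] sym[of c3 c2]
    by (simp_all add: adapted_frame_def)
  then have column: "g v c1 = (v\<bullet>c1) * g c1 c1" "g v c2 = (v\<bullet>c2) * g c2 c2" "g v c3 = (v\<bullet>c3) * g c2 c2"
    by (simp_all add: sym[of v])
  show ?thesis
    unfolding bilinear_frame_expand[OF bil frame, of v w] column orthonormal3_inner[OF frame, of v w]
    by (simp add: algebra_simps)
qed

definition unit_eigenvector :: "(real^3 \<Rightarrow> real^3 \<Rightarrow> real) \<Rightarrow> real^3 \<Rightarrow> bool" where
  "unit_eigenvector g c \<longleftrightarrow> c\<bullet>c = 1 \<and> (\<forall>x. x\<bullet>c = 0 \<longrightarrow> g c x = 0)"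

text \<open>A form with three distinct eigenvalues has only the frame vectors (up to sign) as
  eigenvectors, and none of them is orthogonal to \<open>c1 + c2 + c3\<close>.\<close>
lemma no_unit_eigenvector_orthogonal_to_diagonal:
  assumes bil: "bilinear g" and sym: "\<And>x y. g x y = g y x"
    and frame: "orthonormal3 c1 c2 c3" and diag: "g c1 c2 = 0" "g c1 c3 = 0" "g c2 c3 = 0"
    and distinct: "g c1 c1 \<noteq> g c2 c2" "g c1 c1 \<noteq> g c3 c3" "g c2 c2 \<noteq> g c3 c3"
    and eig: "unit_eigenvector g c" and orth: "c \<bullet> (c1 + c2 + c3) = 0"
  shows False
proof -
  define \<gamma>1 \<gamma>2 \<gamma>3 where "\<gamma>1 = c\<bullet>c1" and "\<gamma>2 = c\<bullet>c2" and "\<gamma>3 = c\<bullet>c3"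
  have g_c: "g c c1 = \<gamma>1 * g c1 c1" "g c c2 = \<gamma>2 * g c2 c2" "g c c3 = \<gamma>3 * g c3 c3"
    using bilinear_frame_expand[OF bil frame, of c1 c] bilinear_frame_expand[OF bil frame, of c2 c]
      bilinear_frame_expand[OF bil frame, of c3 c] diag sym[of c] sym[of c2 c1] sym[of c3 c1] sym[of c3 c2]
    by (simp_all add: \<gamma>1_def \<gamma>2_def \<gamma>3_def inner_commute)
  have product_zero: "\<gamma>i * \<gamma>j = 0"
    if "ci\<bullet>cj = 0" "\<gamma>i = c\<bullet>ci" "\<gamma>j = c\<bullet>cj"
      "g c ci = \<gamma>i * g ci ci" "g c cj = \<gamma>j * g cj cj" "g ci ci \<noteq> g cj cj"
    for ci cj \<gamma>i \<gamma>j
  proof -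
    have "c \<bullet> (\<gamma>j *\<^sub>R ci - \<gamma>i *\<^sub>R cj) = 0"
      using that by (simp add: inner_diff_right)
    then have "(\<gamma>j *\<^sub>R ci - \<gamma>i *\<^sub>R cj) \<bullet> c = 0"
      by (subst inner_commute)
    then have "g c (\<gamma>j *\<^sub>R ci - \<gamma>i *\<^sub>R cj) = 0"
      using eig by (simp add: unit_eigenvector_def)
    then have "\<gamma>i * \<gamma>j * (g ci ci - g cj cj) = 0"
      using that by (simp add: bilinear_rsub[OF bil] bilinear_rmul[OF bil] algebra_simps)
    then show ?thesis
      using that(6) by simp
  qed
  have products: "\<gamma>1 * \<gamma>2 = 0" "\<gamma>1 * \<gamma>3 = 0" "\<gamma>2 * \<gamma>3 = 0"
    using product_zero[of c1 c2 \<gamma>1 \<gamma>2] product_zero[of c1 c3 \<gamma>1 \<gamma>3] product_zero[of c2 c3 \<gamma>2 \<gamma>3]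
      frame g_c distinct
    by (simp_all add: orthonormal3_def \<gamma>1_def \<gamma>2_def \<gamma>3_def)
  have squares: "\<gamma>1\<^sup>2 + \<gamma>2\<^sup>2 + \<gamma>3\<^sup>2 = 1"
    using orthonormal3_inner[OF frame, of c c] eig
    by (simp add: unit_eigenvector_def \<gamma>1_def \<gamma>2_def \<gamma>3_def power2_eq_square)
  have "(\<gamma>1 + \<gamma>2 + \<gamma>3)\<^sup>2 =
      \<gamma>1\<^sup>2 + \<gamma>2\<^sup>2 + \<gamma>3\<^sup>2 + 2 * (\<gamma>1 * \<gamma>2) + 2 * (\<gamma>1 * \<gamma>3) + 2 * (\<gamma>2 * \<gamma>3)"
    by (simp add: power2_eq_square algebra_simps)
  then have "(\<gamma>1 + \<gamma>2 + \<gamma>3)\<^sup>2 = 1"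
    unfolding squares products by simp
  moreover have "\<gamma>1 + \<gamma>2 + \<gamma>3 = 0"
    using orth by (simp add: \<gamma>1_def \<gamma>2_def \<gamma>3_def inner_add_right)
  ultimately show False
    by simp
qed

lemma adapted_frame_exists:
  assumes bil: "bilinear g" and sym: "\<And>x y. g x y = g y x"
    and eig: "\<And>u. u \<noteq> 0 \<Longrightarrow> \<exists>c. unit_eigenvector g c \<and> c\<bullet>u = 0"
  obtains c1 c2 c3 where "adapted_frame g c1 c2 c3"
proof -
  obtain c1 where c1: "unit_eigenvector g c1"
    using eig[of "axis 1 1"] by (auto simp: axis_eq_0_iff)
  then have "c1 \<noteq> 0"
    by (auto simp: unit_eigenvector_def)
  then obtain c2 where c2: "unit_eigenvector g c2" "c2\<bullet>c1 = 0"
    using eig by blast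
  define c3 where "c3 = cross3 c1 c2"
  have frame: "orthonormal3 c1 c2 c3"
    unfolding c3_def using c1 c2 by (intro orthonormal3_cross3) (auto simp: unit_eigenvector_def inner_commute)
  have "c2\<bullet>c1 = 0" "c3\<bullet>c1 = 0" "c3\<bullet>c2 = 0"
    using frame by (simp_all add: orthonormal3_def inner_commute)
  then have diag: "g c1 c2 = 0" "g c1 c3 = 0" "g c2 c3 = 0"
    using c1 c2 by (simp_all add: unit_eigenvector_def)
  have "(c1 + c2 + c3) \<bullet> c1 = 1"
    using frame
    by (simp add: orthonormal3_def inner_add_left inner_commute[of c2 c1] inner_commute[of c3 c1])
  then have "c1 + c2 + c3 \<noteq> 0"
    by auto
  then obtain c where c: "unit_eigenvector g c" "c \<bullet> (c1 + c2 + c3) = 0"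
    using eig by blast
  consider "g c2 c2 = g c3 c3" | "g c1 c1 = g c2 c2" | "g c1 c1 = g c3 c3"
    using no_unit_eigenvector_orthogonal_to_diagonal[OF bil sym frame diag _ _ _ c] by argo
  then show ?thesis
  proof cases
    case 1
    with frame diag show ?thesis
      by (intro that[of c1 c2 c3]) (simp add: adapted_frame_def)
  next
    case 2
    with diag show ?thesis
      using orthonormal3_permute(2)[OF frame]
      by (intro that[of c3 c1 c2]) (simp add: adapted_frame_def sym[of c3 c1] sym[of c3 c2])
  next
    case 3
    with diag show ?thesis
      using orthonormal3_permute(1)[OF frame]
      by (intro that[of c2 c1 c3]) (simp add: adapted_frame_def sym[of c2 c1])
  qed
qed

text \<open>By the normal form of \<open>g\<close> in an adapted frame, preserving \<open>g\<close> forces \<open>\<tau> c1 = \<plusminus>c1\<close>; flipping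
  \<open>c1 + c \<times> c1\<close> then leaves only the half-turn about \<open>c\<close>.\<close>
lemma form_preserving_half_turn:
  assumes orth: "orthogonal_transformation \<tau>"
    and cross: "\<And>x y. \<tau> (cross3 x y) = cross3 (\<tau> x) (\<tau> y)"
    and bil: "bilinear g" and sym: "\<And>x y. g x y = g y x"
    and adapted: "adapted_frame g c1 c2 c3" and distinct: "g c1 c1 \<noteq> g c2 c2"
    and preserves: "\<And>x y. g (\<tau> x) (\<tau> y) = g x y"
    and c: "c\<bullet>c = 1" "c\<bullet>c1 = 0"
    and flip: "\<tau> (c1 + cross3 c c1) = - (c1 + cross3 c c1)"
  shows "\<tau> = half_turn c"
proof -
  have lin: "linear \<tau>" and inner: "\<And>x y. \<tau> x \<bullet> \<tau> y = x \<bullet> y"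
    using orth by (simp_all add: orthogonal_transformation_def)
  have c1c1: "c1\<bullet>c1 = 1"
    using adapted by (simp add: adapted_frame_def orthonormal3_def)
  have "g (\<tau> c1) (\<tau> c1) = (g c1 c1 - g c2 c2) * (\<tau> c1\<bullet>c1)\<^sup>2 + g c2 c2"
    using adapted_frame_form[OF bil sym adapted, of "\<tau> c1" "\<tau> c1"] inner[of c1 c1] c1c1
    by (simp add: power2_eq_square)
  then have "(g c1 c1 - g c2 c2) * ((\<tau> c1\<bullet>c1)\<^sup>2 - 1) = 0"
    using preserves[of c1 c1] by (simp add: algebra_simps)
  then have square: "(\<tau> c1\<bullet>c1)\<^sup>2 = 1"
    using distinct by simp
  have collinear: "\<tau> c1 = (\<tau> c1\<bullet>c1) *\<^sub>R c1"
  proof -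
    have "(\<tau> c1 - (\<tau> c1\<bullet>c1) *\<^sub>R c1) \<bullet> (\<tau> c1 - (\<tau> c1\<bullet>c1) *\<^sub>R c1) =
        \<tau> c1\<bullet>\<tau> c1 - 2 * (\<tau> c1\<bullet>c1)\<^sup>2 + (\<tau> c1\<bullet>c1)\<^sup>2 * (c1\<bullet>c1)"
      by (simp add: inner_diff_left inner_diff_right inner_commute power2_eq_square algebra_simps)
    also have "\<dots> = 0"
      using inner[of c1 c1] square c1c1 by simp
    finally show ?thesis
      by simp
  qed
  define e where "e = cross3 c c1"
  have frame: "orthonormal3 c c1 e"
    unfolding e_def using c c1c1 by (intro orthonormal3_cross3) (simp_all add: inner_commute)
  then have "\<tau> e \<bullet> \<tau> c1 = 0"
    by (simp add: inner orthonormal3_def inner_commute[of e c1])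
  then have \<tau>e_c1: "\<tau> e \<bullet> c1 = 0"
    using square by (subst (asm) collinear) (auto simp: power2_eq_square)
  have sum: "\<tau> c1 + \<tau> e = - c1 - e"
    using flip by (simp add: linear_add[OF lin] e_def)
  have "(\<tau> c1 + \<tau> e) \<bullet> c1 = -1"
    using frame c1c1 unfolding sum by (simp add: orthonormal3_def inner_diff_left inner_commute[of e c1])
  then have \<tau>c1: "\<tau> c1 = - c1"
    using collinear \<tau>e_c1 by (simp add: inner_add_left)
  then have \<tau>e: "\<tau> e = - e"
    using sum by simp
  have "cross3 c1 e = c"
    using c c1c1 by (simp add: e_def cross3_cross3 inner_commute)
  then have \<tau>c: "\<tau> c = c"
    using cross[of c1 e] \<tau>c1 \<tau>e by simp
  have "half_turn c c = \<tau> c" "half_turn c c1 = \<tau> c1" "half_turn c e = \<tau> e"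
    using frame \<tau>c \<tau>c1 \<tau>e
    by (simp_all add: orthonormal3_def half_turn_axis half_turn_orthogonal inner_commute[of c1 c] inner_commute[of e c])
  then show ?thesis
    by (intro linear_eq_orthonormal3[OF lin linear_half_turn frame]) simp_all
qed

section \<open>Quaternion algebra\<close>

lemma vector4_nth [simp]:
  "(vector [a, b, c, d] :: 'x::zero^4) $ 1 = a"
  "(vector [a, b, c, d] :: 'x::zero^4) $ 2 = b"
  "(vector [a, b, c, d] :: 'x::zero^4) $ 3 = c"
  "(vector [a, b, c, d] :: 'x::zero^4) $ 4 = d"
  by (simp_all add: vector_def)

definition qone :: "real^4" where "qone = vector [1, 0, 0, 0]"
definition qconj :: "real^4 \<Rightarrow> real^4" where "qconj x = vector [x$1, - x$2, - x$3, - x$4]"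

definition qpure :: "real^3 \<Rightarrow> real^4" where "qpure v = vector [0, v$1, v$2, v$3]"
definition qvec :: "real^4 \<Rightarrow> real^3" where "qvec x = vector [x$2, x$3, x$4]"

lemma quaternion_nth [simp]:
  "qone$1 = 1" "qone$2 = 0" "qone$3 = 0" "qone$4 = 0"
  "qconj x $ 1 = x$1" "qconj x $ 2 = - x$2" "qconj x $ 3 = - x$3" "qconj x $ 4 = - x$4"
  "qpure v $ 1 = 0" "qpure v $ 2 = v$1" "qpure v $ 3 = v$2" "qpure v $ 4 = v$3"
  "qvec x $ 1 = x$2" "qvec x $ 2 = x$3" "qvec x $ 3 = x$4"
  by (simp_all add: qone_def qconj_def qpure_def qvec_def)

lemma qmult_nth:
  "qmult x y $ 1 = x$1*y$1 - x$2*y$2 - x$3*y$3 - x$4*y$4"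
  "qmult x y $ 2 = x$1*y$2 + x$2*y$1 + x$3*y$4 - x$4*y$3"
  "qmult x y $ 3 = x$1*y$3 - x$2*y$4 + x$3*y$1 + x$4*y$2"
  "qmult x y $ 4 = x$1*y$4 + x$2*y$3 - x$3*y$2 + x$4*y$1"
  by (simp_all add: qmult_def)

lemma inner_vec4: "(x::real^4) \<bullet> y = x$1*y$1 + x$2*y$2 + x$3*y$3 + x$4*y$4"
  by (simp add: inner_vec_def sum_4)

lemma inner_vec3: "(x::real^3) \<bullet> y = x$1*y$1 + x$2*y$2 + x$3*y$3"
  by (simp add: inner_vec_def sum_3)

lemma vec4_eq_iff: "(x::real^4) = y \<longleftrightarrow> x$1 = y$1 \<and> x$2 = y$2 \<and> x$3 = y$3 \<and> x$4 = y$4"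
  by (simp add: vec_eq_iff forall_4)

lemma vec3_eq_iff: "(x::real^3) = y \<longleftrightarrow> x$1 = y$1 \<and> x$2 = y$2 \<and> x$3 = y$3"
  by (simp add: vec_eq_iff forall_3)

lemma qmult_add_right: "qmult a (x + y) = qmult a x + qmult a y"
  and qmult_add_left: "qmult (x + y) a = qmult x a + qmult y a"
  and qmult_diff_right: "qmult a (x - y) = qmult a x - qmult a y"
  and qmult_diff_left: "qmult (x - y) a = qmult x a - qmult y a"
  and qmult_scaleR_right: "qmult a (r *\<^sub>R x) = r *\<^sub>R qmult a x"
  and qmult_scaleR_left: "qmult (r *\<^sub>R x) a = r *\<^sub>R qmult x a"
  and qmult_minus_right: "qmult a (- x) = - qmult a x"
  and qmult_minus_left: "qmult (- x) a = - qmult x a"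
  and qmult_assoc: "qmult (qmult a b) c = qmult a (qmult b c)"
  by (simp_all add: vec4_eq_iff qmult_nth algebra_simps)

lemma qmult_zero_right [simp]: "qmult a 0 = 0"
  by (simp add: vec4_eq_iff qmult_nth)

lemma qmult_one_right [simp]: "qmult x qone = x"
  and qmult_one_left [simp]: "qmult qone x = x"
  by (simp_all add: vec4_eq_iff qmult_nth)

lemma inner_qmult_left: "qmult a x \<bullet> qmult a y = (a\<bullet>a) * (x\<bullet>y)"
  by (simp add: inner_vec4 qmult_nth algebra_simps)

lemma qmult_qconj_self: "qmult (qconj u) u = (u\<bullet>u) *\<^sub>R qone"
  and qmult_self_qconj: "qmult u (qconj u) = (u\<bullet>u) *\<^sub>R qone"
  by (simp_all add: vec4_eq_iff qmult_nth inner_vec4 algebra_simps)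

lemma qmult_qpure_qpure: "qmult (qpure a) (qpure b) = (- (a\<bullet>b)) *\<^sub>R qone + qpure (cross3 a b)"
  by (simp add: vec4_eq_iff qmult_nth inner_vec3 cross3_def algebra_simps)

lemma qmult_qpure_twice: "qmult (qpure a) (qmult (qpure a) x) = (- (a\<bullet>a)) *\<^sub>R x"
  by (simp add: vec4_eq_iff qmult_nth inner_vec3 algebra_simps)

lemma qpure_add: "qpure (a + b) = qpure a + qpure b"
  and qpure_scaleR: "qpure (r *\<^sub>R a) = r *\<^sub>R qpure a"
  and qpure_zero [simp]: "qpure 0 = 0"
  by (simp_all add: vec4_eq_iff)

lemma linear_qvec: "linear qvec"
  by (rule linearI) (simp_all add: vec3_eq_iff)

lemma qvec_qpure [simp]: "qvec (qpure v) = v"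
  by (simp add: vec3_eq_iff)

lemma qpure_qvec: "x \<in> ImH \<Longrightarrow> qpure (qvec x) = x"
  by (simp add: vec4_eq_iff ImH_def)

lemma qpure_ImH: "qpure v \<in> ImH"
  by (simp add: ImH_def)

lemma qpure_inject: "qpure a = qpure b \<longleftrightarrow> a = b"
  by (metis qvec_qpure)

lemma inner_qpure: "qpure a \<bullet> qpure b = a \<bullet> b"
  by (simp add: inner_vec4 inner_vec3)

lemma qpure_axis: "qpure (axis 1 1) = qi" "qpure (axis 2 1) = qj" "qpure (axis 3 1) = qk"
  by (simp_all add: vec4_eq_iff qi_def qj_def qk_def axis_def)

definition qrot :: "real^4 \<Rightarrow> real^3 \<Rightarrow> real^3" where
  "qrot u a = qvec (qmult (qmult u (qpure a)) (qconj u))"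

lemma qpure_qrot: "qpure (qrot u a) = qmult (qmult u (qpure a)) (qconj u)"
  unfolding qrot_def by (rule qpure_qvec) (simp add: ImH_def qmult_nth algebra_simps)

lemma qmult_unit_qpure: "u\<bullet>u = 1 \<Longrightarrow> qmult u (qpure a) = qmult (qpure (qrot u a)) u"
  by (simp add: qpure_qrot qmult_assoc qmult_qconj_self)

lemma qrot_eqI:
  assumes "u\<bullet>u = 1" "qmult u (qpure a) = qmult (qpure b) u"
  shows "qrot u a = b"
proof -
  have "qpure (qrot u a) = qmult (qmult (qpure b) u) (qconj u)"
    by (simp add: qpure_qrot assms(2))
  also have "\<dots> = qpure b"
    using assms(1) by (simp add: qmult_assoc qmult_self_qconj qmult_scaleR_right)
  finally show ?thesis
    by (simp add: qpure_inject)
qed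

lemma inner_qrot: "u\<bullet>u = 1 \<Longrightarrow> qrot u a \<bullet> qrot u b = a \<bullet> b"
  unfolding inner_qpure[symmetric] qpure_qrot
  by (simp add: inner_vec4 inner_vec3 qmult_nth) algebra

lemma qpure_commute: "cross3 x c = 0 \<Longrightarrow> qmult (qpure x) (qpure c) = qmult (qpure c) (qpure x)"
  using cross_skew[of c x] by (simp add: qmult_qpure_qpure inner_commute)

text \<open>For unit \<open>a \<noteq> -b\<close> the quaternion \<open>1 - b a\<close> (normalised) rotates \<open>a\<close> to \<open>b\<close> about
  the axis \<open>a \<times> b\<close>, hence commutes with every pure quaternion orthogonal to \<open>a\<close> and \<open>b\<close>.\<close>
lemma exists_unit_quaternion_turning:
  fixes a b c :: "real^3"
  assumes a: "a\<bullet>a = 1" and b: "b\<bullet>b = 1" and ca: "c\<bullet>a = 0" and cb: "c\<bullet>b = 0"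
  obtains u where "u\<bullet>u = 1" "qmult u (qpure a) = qmult (qpure b) u" "qmult u (qpure c) = qmult (qpure c) u"
proof (cases "b = - a")
  case True
  obtain p where p: "p\<bullet>p = 1" "p\<bullet>a = 0" "cross3 p c = 0"
  proof (cases "c = 0")
    case True
    have "a \<noteq> 0"
      using a by auto
    then obtain p where "p\<bullet>p = 1" "p\<bullet>a = 0"
      by (rule exists_unit_orthogonal)
    with True show ?thesis
      using that by simp
  next
    case False
    then show ?thesis
      using ca by (intro that[of "c /\<^sub>R norm c"]) (simp_all add: dot_square_norm cross_mult_left)
  qed
  have "qmult (qpure p) (qpure a) = qmult (qpure b) (qpure p)"
    using p True by (simp add: qmult_qpure_qpure inner_commute cross_skew[of a p])
  moreover have "qpure p \<bullet> qpure p = 1"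
    using p by (simp add: inner_qpure)
  ultimately show ?thesis
    using qpure_commute[OF p(3)] that by blast
next
  case False
  define w where "w = qone - qmult (qpure b) (qpure a)"
  have w_eq: "w = (1 + a\<bullet>b) *\<^sub>R qone - qpure (cross3 b a)"
    by (simp add: w_def qmult_qpure_qpure inner_commute algebra_simps)
  have "w \<noteq> 0"
  proof
    assume "w = 0"
    then have "w$1 = 0"
      by simp
    then have "a\<bullet>b = -1"
      by (simp add: w_eq)
    then have "(a + b) \<bullet> (a + b) = 0"
      using a b by (simp add: inner_add_left inner_add_right inner_commute)
    with False show False
      by (simp add: add_eq_0_iff2)
  qed
  have wa: "qmult w (qpure a) = qmult (qpure b) w"
  proof -
    have "qmult (qpure a) (qpure a) = - qone" "qmult (qpure b) (qpure b) = - qone"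
      using a b by (simp_all add: qmult_qpure_qpure)
    then show ?thesis
      by (simp add: w_def qmult_diff_left qmult_diff_right qmult_assoc qmult_minus_right)
        (simp add: qmult_assoc[symmetric] qmult_minus_left)
  qed
  have "cross3 (cross3 b a) c = 0"
    using ca cb by (simp add: cross_skew[of "cross3 b a"] cross3_cross3 inner_commute)
  then have wc: "qmult w (qpure c) = qmult (qpure c) w"
    by (simp add: w_eq qmult_diff_left qmult_diff_right qmult_scaleR_left qmult_scaleR_right qpure_commute)
  show ?thesis
  proof (rule that[of "w /\<^sub>R norm w"])
    show "(w /\<^sub>R norm w) \<bullet> (w /\<^sub>R norm w) = 1"
      using \<open>w \<noteq> 0\<close> by (simp add: dot_square_norm)
  qed (simp_all add: qmult_scaleR_left qmult_scaleR_right wa wc)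
qed

lemma exists_unit_quaternion_jk:
  fixes a2 a3 :: "real^3"
  assumes a2: "a2\<bullet>a2 = 1" and a3: "a3\<bullet>a3 = 1" and a23: "a2\<bullet>a3 = 0"
  obtains u where "u\<bullet>u = 1" "qmult u (qpure a2) = qmult qj u" "qmult u (qpure a3) = qmult qk u"
proof -
  have unit: "axis i 1 \<bullet> (axis i 1 :: real^3) = 1" "axis 2 1 \<bullet> (axis 3 1 :: real^3) = 0" for i :: 3
    by (simp_all add: inner_axis_axis)
  obtain u1 where u1: "u1\<bullet>u1 = 1" "qmult u1 (qpure a2) = qmult qj u1"
    using exists_unit_quaternion_turning[OF a2 unit(1)[of 2], of 0] qpure_axis by auto
  define a3' where "a3' = qrot u1 a3"
  have "qrot u1 a2 = axis 2 1"
    using u1 by (intro qrot_eqI) (simp_all add: qpure_axis)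
  then have a3': "a3'\<bullet>a3' = 1" "axis 2 1 \<bullet> a3' = 0"
    using inner_qrot[OF u1(1), of a3 a3] inner_qrot[OF u1(1), of a2 a3] a3 a23
    by (simp_all add: a3'_def)
  obtain u2 where u2: "u2\<bullet>u2 = 1" "qmult u2 (qpure a3') = qmult qk u2" "qmult u2 qj = qmult qj u2"
    using exists_unit_quaternion_turning[OF a3'(1) unit(1)[of 3] a3'(2) unit(2)] qpure_axis by auto
  have u1a3: "qmult u1 (qpure a3) = qmult (qpure a3') u1"
    unfolding a3'_def using u1(1) by (rule qmult_unit_qpure)
  show ?thesis
  proof (rule that[of "qmult u2 u1"])
    show "qmult u2 u1 \<bullet> qmult u2 u1 = 1"
      using u1 u2 by (simp add: inner_qmult_left)
    show "qmult (qmult u2 u1) (qpure a2) = qmult qj (qmult u2 u1)"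
      by (simp add: qmult_assoc u1(2)) (simp add: qmult_assoc[symmetric] u2(3))
    show "qmult (qmult u2 u1) (qpure a3) = qmult qk (qmult u2 u1)"
      by (simp add: qmult_assoc u1a3) (simp add: qmult_assoc[symmetric] u2(2))
  qed
qed

lemma quaternion_normal_form:
  fixes b1 b2 b3 :: "real^3"
  assumes nz: "b1 \<noteq> 0" "b2 \<noteq> 0"
    and orth: "b1\<bullet>b2 = 0" "b1\<bullet>b3 = 0" "b2\<bullet>b3 = 0" and norm23: "b2\<bullet>b2 = b3\<bullet>b3"
  obtains u lam \<mu> where "u\<bullet>u = 1" "lam \<noteq> 0" "\<mu> \<noteq> 0"
    "qmult u (qpure b1) = qmult (lam *\<^sub>R qi) u"
    "qmult u (qpure b2) = qmult (\<mu> *\<^sub>R qj) u"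
    "qmult u (qpure b3) = qmult (\<mu> *\<^sub>R qk) u"
proof -
  define \<mu> where "\<mu> = norm b2"
  have \<mu>: "\<mu> > 0" "\<mu> * \<mu> = b2\<bullet>b2"
    using nz(2) by (simp_all add: \<mu>_def dot_square_norm power2_eq_square)
  define a2 a3 where "a2 = b2 /\<^sub>R \<mu>" and "a3 = b3 /\<^sub>R \<mu>"
  have "a2\<bullet>a2 = (b2\<bullet>b2) / (\<mu> * \<mu>)" "a3\<bullet>a3 = (b3\<bullet>b3) / (\<mu> * \<mu>)"
    by (simp_all add: a2_def a3_def field_simps)
  moreover have "a2\<bullet>a3 = 0"
    using orth(3) by (simp add: a2_def a3_def)
  moreover have "b2\<bullet>b2 = \<mu> * \<mu>" "b3\<bullet>b3 = \<mu> * \<mu>"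
    using \<mu>(2) norm23 by simp_all
  ultimately have "a2\<bullet>a2 = 1" "a3\<bullet>a3 = 1" "a2\<bullet>a3 = 0"
    using \<mu>(1) by simp_all
  then obtain u where u: "u\<bullet>u = 1" "qmult u (qpure a2) = qmult qj u" "qmult u (qpure a3) = qmult qk u"
    by (rule exists_unit_quaternion_jk)
  have b23: "b2 = \<mu> *\<^sub>R a2" "b3 = \<mu> *\<^sub>R a3"
    using \<mu> by (simp_all add: a2_def a3_def)
  define r where "r = qrot u b1"
  have "qrot u a2 = axis 2 1" "qrot u a3 = axis 3 1"
    using u by (simp_all add: qrot_eqI qpure_axis)
  then have "r $ 2 = 0" "r $ 3 = 0"
    using inner_qrot[OF u(1), of b1 a2] inner_qrot[OF u(1), of b1 a3] orth(1,2)
    by (simp_all add: r_def a2_def a3_def inner_axis)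
  then have r: "qpure r = (r$1) *\<^sub>R qi"
    by (simp add: vec4_eq_iff qi_def)
  have "r$1 \<noteq> 0"
  proof
    assume "r$1 = 0"
    then have "b1\<bullet>b1 = 0"
      using inner_qrot[OF u(1), of b1 b1] r by (simp add: r_def inner_qpure[symmetric])
    with nz(1) show False
      by simp
  qed
  moreover have "qmult u (qpure b1) = qmult ((r$1) *\<^sub>R qi) u"
    using qmult_unit_qpure[OF u(1), of b1] r by (simp add: r_def)
  ultimately show ?thesis
    using that[of u "r$1" \<mu>] u \<mu>(1) b23
    by (simp add: qpure_scaleR qmult_scaleR_left qmult_scaleR_right)
qed

section \<open>Block-diagonal operators on quaternionic space\<close>

lemma qdiag_nth [simp]: "qdiag f x $ s = f s (x $ s)"
  by (simp add: qdiag_def)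

lemma orthogonal_transformation_qdiag:
  assumes "\<And>s. orthogonal_transformation (f s)"
  shows "orthogonal_transformation (qdiag f)"
  using assms unfolding orthogonal_transformation_iff_inner by (simp add: inner_vec_def)

lemma orthogonal_transformation_qmult: "u\<bullet>u = 1 \<Longrightarrow> orthogonal_transformation (qmult u)"
  by (simp add: orthogonal_transformation_iff_inner inner_qmult_left)

definition qblock :: "'p::finite \<Rightarrow> real^4 \<Rightarrow> real^4^'p" where
  "qblock s q = (\<chi> t. if t = s then q else 0)"

lemma qblock_nth: "qblock s q $ t = (if t = s then q else 0)"
  by (simp add: qblock_def)

lemma conjugate_eqI:
  assumes "bij \<Phi>" "\<And>x. \<Phi> (K x) = K' (\<Phi> x)"
  shows "\<Phi> \<circ> K \<circ> inv \<Phi> = K'" "inv \<Phi> \<circ> K' \<circ> \<Phi> = K"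
proof -
  show "\<Phi> \<circ> K \<circ> inv \<Phi> = K'"
    using assms by (simp add: fun_eq_iff bij_betw_inv_into_right)
  show "inv \<Phi> \<circ> K' \<circ> \<Phi> = K"
    using assms by (simp add: fun_eq_iff bij_is_inj flip: assms(2))
qed

section \<open>The weakly symmetric pair\<close>

locale quaternionic_ws_pair =
  fixes A :: "'p::finite \<Rightarrow> 'z::euclidean_space \<Rightarrow> real^4"
    and ip :: "(real^4^'p \<Rightarrow> real^4^'p) \<Rightarrow> (real^4^'p \<Rightarrow> real^4^'p) \<Rightarrow> real"
  assumes A_linear: "\<And>s. linear (A s)"
    and A_inj: "\<And>s. inj (A s)"
    and A_range: "\<And>s. range (A s) = ImH"
    and inner_product: "inner_product_on {qdiag (\<lambda>s. Lq (A s Z)) | Z. True} ip"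
    and WS: "WS_pair {qdiag (\<lambda>s. Lq (A s Z)) | Z. True} ip"
begin

abbreviation V where "V \<equiv> {qdiag (\<lambda>s. Lq (A s Z)) | Z. True}"

definition Jz :: "'z \<Rightarrow> real^4^'p \<Rightarrow> real^4^'p" where
  "Jz Z = qdiag (\<lambda>s. Lq (A s Z))"

lemma V_eq: "V = range Jz"
  by (auto simp: Jz_def)

lemma Jz_in_V: "Jz Z \<in> V"
  by (auto simp: Jz_def)

definition coord :: "'p \<Rightarrow> 'z \<Rightarrow> real^3" where
  "coord s Z = qvec (A s Z)"

definition coord_inv :: "'p \<Rightarrow> real^3 \<Rightarrow> 'z" where
  "coord_inv s = inv (coord s)"

lemma qpure_coord: "qpure (coord s Z) = A s Z"
  unfolding coord_def by (rule qpure_qvec) (use A_range in blast)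

lemma linear_coord: "linear (coord s)"
  unfolding coord_def using linear_compose[OF A_linear linear_qvec] by (simp add: comp_def)

lemma coord_inject: "coord s Z = coord s W \<longleftrightarrow> Z = W"
  by (metis A_inj injD qpure_coord)

lemma coord_coord_inv [simp]: "coord s (coord_inv s v) = v"
proof -
  have "qpure v \<in> range (A s)"
    using A_range qpure_ImH by blast
  then have "v \<in> range (coord s)"
    by (metis coord_def qvec_qpure rangeE rangeI)
  then show ?thesis
    by (simp add: coord_inv_def f_inv_into_f)
qed

lemma coord_inv_coord [simp]: "coord_inv s (coord s Z) = Z"
  unfolding coord_inv_def by (rule inv_f_f) (simp add: inj_on_def coord_inject)

lemma linear_coord_inv: "linear (coord_inv s)"
proof (rule linearI)
  show "coord_inv s (a + b) = coord_inv s a + coord_inv s b" for a b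
  proof -
    have "coord s (coord_inv s (a + b)) = coord s (coord_inv s a + coord_inv s b)"
      by (simp add: linear_add[OF linear_coord])
    then show ?thesis
      by (simp only: coord_inject)
  qed
  show "coord_inv s (r *\<^sub>R a) = r *\<^sub>R coord_inv s a" for r a
  proof -
    have "coord s (coord_inv s (r *\<^sub>R a)) = coord s (r *\<^sub>R coord_inv s a)"
      by (simp add: linear_cmul[OF linear_coord])
    then show ?thesis
      by (simp only: coord_inject)
  qed
qed

lemma coord_eq_0_iff: "coord s Z = 0 \<longleftrightarrow> Z = 0"
  using coord_inject linear_0[OF linear_coord] by metis

lemma coord_inv_eq_0_iff: "coord_inv s v = 0 \<longleftrightarrow> v = 0"
  by (metis coord_coord_inv coord_inv_coord linear_0[OF linear_coord])

lemma Jz_nth: "Jz Z x $ t = qmult (qpure (coord t Z)) (x $ t)"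
  by (simp add: Jz_def Lq_def qpure_coord)

lemma Jz_qblock: "Jz Z (qblock s q) = qblock s (qmult (qpure (coord s Z)) q)"
  by (simp add: vec_eq_iff Jz_nth qblock_nth)

lemma Jz_add: "Jz (Z + W) = (\<lambda>x. Jz Z x + Jz W x)"
  and Jz_scaleR: "Jz (r *\<^sub>R Z) = (\<lambda>x. r *\<^sub>R Jz Z x)"
  by (simp_all add: fun_eq_iff vec_eq_iff Jz_nth linear_add[OF linear_coord]
      linear_cmul[OF linear_coord] qpure_add qpure_scaleR qmult_add_left qmult_scaleR_left)

lemma Jz_minus: "Jz (- Z) = (\<lambda>x. - Jz Z x)"
  using Jz_scaleR[of "-1" Z] by simp

lemma Jz_minus_right: "Jz Z (- x) = - Jz Z x"
  by (simp add: vec_eq_iff Jz_nth qmult_minus_right)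

lemma Jz_inject: "Jz Z = Jz W \<longleftrightarrow> Z = W"
proof
  assume "Jz Z = Jz W"
  then have "Jz Z (qblock s qone) $ s = Jz W (qblock s qone) $ s" for s
    by simp
  then have "coord s Z = coord s W" for s
    by (simp add: Jz_qblock qblock_nth qpure_inject)
  then show "Z = W"
    by (simp add: coord_inject)
qed simp

definition ipz :: "'z \<Rightarrow> 'z \<Rightarrow> real" where
  "ipz Z W = ip (Jz Z) (Jz W)"

definition block_form :: "'p \<Rightarrow> real^3 \<Rightarrow> real^3 \<Rightarrow> real" where
  "block_form s a b = ipz (coord_inv s a) (coord_inv s b)"

lemma ip_V:
  "J \<in> V \<Longrightarrow> K \<in> V \<Longrightarrow> ip J K = ip K J"
  "J \<in> V \<Longrightarrow> K \<in> V \<Longrightarrow> L \<in> V \<Longrightarrow> ip (\<lambda>x. J x + K x) L = ip J L + ip K L"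
  "J \<in> V \<Longrightarrow> K \<in> V \<Longrightarrow> ip (\<lambda>x. c *\<^sub>R J x) K = c * ip J K"
  "J \<in> V \<Longrightarrow> J \<noteq> (\<lambda>x. 0) \<Longrightarrow> ip J J > 0"
  using inner_product unfolding inner_product_on_def by blast+

lemma ipz_sym: "ipz Z W = ipz W Z"
  unfolding ipz_def by (rule ip_V(1)) (rule Jz_in_V)+

lemma ipz_add_left: "ipz (Z + W) Y = ipz Z Y + ipz W Y"
  unfolding ipz_def Jz_add by (rule ip_V(2)) (rule Jz_in_V)+

lemma ipz_scaleR_left: "ipz (r *\<^sub>R Z) Y = r * ipz Z Y"
  unfolding ipz_def Jz_scaleR by (rule ip_V(3)) (rule Jz_in_V)+

lemma ipz_pos: "Z \<noteq> 0 \<Longrightarrow> ipz Z Z > 0"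
  unfolding ipz_def
proof (rule ip_V(4))
  assume "Z \<noteq> 0"
  then show "Jz Z \<noteq> (\<lambda>x. 0)"
    using Jz_inject[of Z 0] Jz_scaleR[of 0 Z] by simp
qed (rule Jz_in_V)

lemma bilinear_ipz: "bilinear ipz"
proof -
  have left: "linear (\<lambda>Z. ipz Z Y)" for Y
    by (rule linearI) (simp_all add: ipz_add_left ipz_scaleR_left)
  moreover have "linear (\<lambda>Z. ipz Y Z)" for Y
    by (rule linearI) (simp_all add: ipz_sym[of Y] ipz_add_left ipz_scaleR_left)
  ultimately show ?thesis
    by (simp add: bilinear_def)
qed

lemma bilinear_block_form: "bilinear (block_form s)"
proof -
  have "linear (\<lambda>b. ipz Z (coord_inv s b))" "linear (\<lambda>a. ipz (coord_inv s a) Z)" for Z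
    using linear_compose[OF linear_coord_inv bilinear_ipz[unfolded bilinear_def, THEN conjunct1, rule_format]]
      linear_compose[OF linear_coord_inv bilinear_ipz[unfolded bilinear_def, THEN conjunct2, rule_format]]
    by (simp_all add: comp_def)
  then show ?thesis
    by (simp add: bilinear_def block_form_def)
qed

lemma block_form_sym: "block_form s a b = block_form s b a"
  by (simp add: block_form_def ipz_sym)

text \<open>Meaningful only for \<open>N \<in> NV V ip\<close>, where conjugation by \<open>N\<close> maps \<open>V = range Jz\<close>
  into itself.\<close>
definition induced :: "(real^4^'p \<Rightarrow> real^4^'p) \<Rightarrow> 'z \<Rightarrow> 'z" where
  "induced N W = (SOME W'. N \<circ> Jz W \<circ> inv N = Jz W')"

lemma normalizer:
  assumes "N \<in> NV V ip"
  shows "linear N" "bij N" "N \<circ> Jz W \<circ> inv N = Jz (induced N W)"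
    "ipz (induced N W) (induced N W') = ipz W W'"
proof -
  have orth: "orthogonal_transformation N"
    using assms by (simp add: NV_def)
  then show "linear N" "bij N"
    by (simp_all add: orthogonal_transformation_linear orthogonal_transformation_bij)
  have "N \<circ> Jz W \<circ> inv N \<in> V" for W
    using assms Jz_in_V unfolding NV_def by blast
  then have "N \<circ> Jz W \<circ> inv N \<in> range Jz" for W
    by (metis V_eq)
  then show conj: "N \<circ> Jz W \<circ> inv N = Jz (induced N W)" for W
    unfolding induced_def by (metis (mono_tags) rangeE someI)
  show "ipz (induced N W) (induced N W') = ipz W W'"
    using assms Jz_in_V by (simp add: NV_def ipz_def flip: conj)
qed

lemma normalizer_intertwines:
  assumes "N \<in> NV V ip"
  shows "N (Jz W x) = Jz (induced N W) (N x)"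
  using fun_cong[OF normalizer(3)[OF assms, of W], of "N x"] normalizer(2)[OF assms]
  by (simp add: bij_is_inj)

lemma induced_ws_reversal: "\<exists>N \<in> NV V ip. N X = - X \<and> induced N Z = - Z"
proof -
  obtain N where N: "N \<in> NV V ip" "N X = - X" "N \<circ> Jz Z = (\<lambda>x. - Jz Z (N x))"
    using WS Jz_in_V unfolding WS_pair_def Jz_def by blast
  have "Jz (induced N Z) = N \<circ> Jz Z \<circ> inv N"
    using normalizer(3)[OF N(1)] by simp
  also have "\<dots> = (\<lambda>x. - Jz Z (N (inv N x)))"
    using N(3) by (simp add: comp_def fun_eq_iff)
  also have "\<dots> = Jz (- Z)"
    using normalizer(2)[OF N(1)] by (simp add: Jz_minus bij_betw_inv_into_right)
  finally have "induced N Z = - Z"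
    by (simp add: Jz_inject)
  with N show ?thesis
    by blast
qed

definition block_rotation :: "(real^4^'p \<Rightarrow> real^4^'p) \<Rightarrow> 'p \<Rightarrow> real^3 \<Rightarrow> real^3" where
  "block_rotation N s v = coord s (induced N (coord_inv s v))"

text \<open>If \<open>N\<close> reverses the unit of block \<open>s\<close>, it maps the block vector \<open>a b\<close> to \<open>- (\<tau> a) (\<tau> b)\<close>
  for the induced map \<open>\<tau>\<close> on \<open>Im H\<close>; comparing real and imaginary parts of
  \<open>a b = - a\<bullet>b + a \<times> b\<close> shows that \<open>\<tau>\<close> preserves inner and cross products.\<close>
lemma block_rotation:
  assumes N: "N \<in> NV V ip" and flip: "N (qblock s qone) = - qblock s qone"
  shows "orthogonal_transformation (block_rotation N s)"
    and "block_rotation N s (cross3 a b) = cross3 (block_rotation N s a) (block_rotation N s b)"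
    and "block_form s (block_rotation N s a) (block_rotation N s b) = block_form s a b"
proof -
  define \<tau> where "\<tau> = block_rotation N s"
  have lin: "linear N"
    by (rule normalizer(1)[OF N])
  have image: "N (qblock s (qmult (qpure v) q)) = Jz (induced N (coord_inv s v)) (N (qblock s q))" for v q
    using normalizer_intertwines[OF N, of "coord_inv s v" "qblock s q"] by (simp add: Jz_qblock)
  have pure: "N (qblock s (qpure v)) = - qblock s (qpure (\<tau> v))" for v
    using image[of v qone] by (simp add: flip Jz_minus_right Jz_qblock \<tau>_def block_rotation_def)
  have E: "(a\<bullet>b) *\<^sub>R qone - qpure (\<tau> (cross3 a b)) = (\<tau> a \<bullet> \<tau> b) *\<^sub>R qone - qpure (cross3 (\<tau> a) (\<tau> b))"
    for a b
  proof -
    have "N (qblock s (qmult (qpure a) (qpure b))) = - qblock s (qmult (qpure (\<tau> a)) (qpure (\<tau> b)))"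
      using image[of a "qpure b"] by (simp add: pure Jz_minus_right Jz_qblock \<tau>_def block_rotation_def)
    moreover have "qblock s (qmult (qpure a) (qpure b)) = qblock s (qpure (cross3 a b)) - (a\<bullet>b) *\<^sub>R qblock s qone"
      by (simp add: qmult_qpure_qpure vec_eq_iff qblock_nth)
    then have "N (qblock s (qmult (qpure a) (qpure b))) = (a\<bullet>b) *\<^sub>R qblock s qone - qblock s (qpure (\<tau> (cross3 a b)))"
      by (simp add: linear_diff[OF lin] linear_cmul[OF lin] flip pure)
    ultimately have "(a\<bullet>b) *\<^sub>R qblock s qone - qblock s (qpure (\<tau> (cross3 a b))) = - qblock s (qmult (qpure (\<tau> a)) (qpure (\<tau> b)))"
      by simp
    from arg_cong[OF this, of "\<lambda>x. x $ s"] show ?thesis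
      by (simp add: qblock_nth qmult_qpure_qpure)
  qed
  have inner: "\<tau> a \<bullet> \<tau> b = a \<bullet> b" for a b
    using arg_cong[OF E[of a b], of "\<lambda>x. x $ 1"] by simp
  then show "orthogonal_transformation (block_rotation N s)"
    by (simp add: orthogonal_transformation_iff_inner \<tau>_def)
  show "block_rotation N s (cross3 a b) = cross3 (block_rotation N s a) (block_rotation N s b)"
    using E[of a b] inner[of a b] by (simp add: \<tau>_def qpure_inject)
  show "block_form s (block_rotation N s a) (block_rotation N s b) = block_form s a b"
    by (simp add: block_form_def block_rotation_def normalizer(4)[OF N])
qed

lemma block_rotation_reversing:
  assumes "u \<noteq> 0"
  obtains N where "N \<in> NV V ip" "N (qblock s qone) = - qblock s qone" "block_rotation N s u = - u"
proof -
  obtain N where "N \<in> NV V ip" "N (qblock s qone) = - qblock s qone" "induced N (coord_inv s u) = - coord_inv s u"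
    using induced_ws_reversal by blast
  then show ?thesis
    by (intro that[of N]) (simp_all add: block_rotation_def linear_neg[OF linear_coord])
qed

lemma block_form_unit_eigenvector:
  assumes "u \<noteq> 0"
  shows "\<exists>c. unit_eigenvector (block_form s) c \<and> c\<bullet>u = 0"
proof -
  obtain N where N: "N \<in> NV V ip" "N (qblock s qone) = - qblock s qone" "block_rotation N s u = - u"
    using block_rotation_reversing[OF assms] .
  obtain c where c: "c\<bullet>c = 1" "c\<bullet>u = 0" "block_rotation N s = half_turn c"
    using cross_preserving_reversal_is_half_turn[OF block_rotation(1,2)[OF N(1,2)] N(3) assms] .
  have "block_form s c x = 0" if "x\<bullet>c = 0" for x
  proof -
    have "block_form s c x = block_form s c (- x)"
      using block_rotation(3)[OF N(1,2), of c x] c that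
      by (simp add: half_turn_axis half_turn_orthogonal)
    then show ?thesis
      by (simp add: bilinear_rneg[OF bilinear_block_form])
  qed
  with c show ?thesis
    by (auto simp: unit_eigenvector_def)
qed

lemma block_form_adapted_frame:
  obtains c1 c2 c3 where "adapted_frame (block_form s) c1 c2 c3"
  using adapted_frame_exists[OF bilinear_block_form block_form_sym block_form_unit_eigenvector] by blast

text \<open>The numbers \<open>- |coord u W|\<^sup>2\<close> are the eigenvalues of \<open>Jz W\<^sup>2\<close>, which \<open>N\<close> conjugates to
  \<open>Jz (induced N W)\<^sup>2\<close>.\<close>
lemma norm_coord_induced:
  assumes N: "N \<in> NV V ip"
  obtains u where "coord t (induced N W) \<bullet> coord t (induced N W) = coord u W \<bullet> coord u W"
proof -
  define q where "q = coord t (induced N W) \<bullet> coord t (induced N W)"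
  have square: "Jz Y (Jz Y z) = (\<chi> u. (- (coord u Y \<bullet> coord u Y)) *\<^sub>R z $ u)" for Y z
    by (simp add: vec_eq_iff Jz_nth qmult_qpure_twice)
  define x where "x = inv N (qblock t qone)"
  have Nx: "N x = qblock t qone"
    using normalizer(2)[OF N] by (simp add: x_def bij_betw_inv_into_right)
  have lin: "linear N"
    by (rule normalizer(1)[OF N])
  have "N (Jz W (Jz W x)) = Jz (induced N W) (Jz (induced N W) (qblock t qone))"
    by (simp add: normalizer_intertwines[OF N] Nx)
  also have "\<dots> = (- q) *\<^sub>R qblock t qone"
    by (simp add: square q_def vec_eq_iff qblock_nth)
  also have "\<dots> = N ((- q) *\<^sub>R x)"
    by (simp add: linear_cmul[OF lin] linear_neg[OF lin] Nx)
  finally have eigen: "Jz W (Jz W x) = (- q) *\<^sub>R x"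
    using normalizer(2)[OF N] by (simp add: bij_is_inj inj_eq)
  have "qblock t qone $ t $ 1 = 1"
    by (simp add: qblock_nth)
  then have "x \<noteq> 0"
    using Nx linear_0[OF lin] by auto
  then obtain u where u: "x $ u \<noteq> 0"
    by (auto simp: vec_eq_iff)
  have "(- (coord u W \<bullet> coord u W)) *\<^sub>R x $ u = (- q) *\<^sub>R x $ u"
    using arg_cong[OF eigen, of "\<lambda>y. y $ u"] by (simp only: square vec_lambda_beta vector_scaleR_component)
  then show ?thesis
    using u by (intro that[of u]) (simp add: q_def)
qed

lemma adapted_frame_half_turns:
  assumes adapted: "adapted_frame (block_form s) c1 c2 c3"
    and distinct: "block_form s c1 c1 \<noteq> block_form s c2 c2"
    and c: "c\<bullet>c = 1" "c\<bullet>c1 = 0"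
  obtains N where "N \<in> NV V ip" "block_rotation N s = half_turn c"
proof -
  have frame: "orthonormal3 c1 c2 c3"
    using adapted by (simp add: adapted_frame_def)
  have "c1 + cross3 c c1 \<noteq> 0"
  proof
    assume "c1 + cross3 c c1 = 0"
    then have "(c1 + cross3 c c1) \<bullet> c1 = 0"
      by simp
    with frame show False
      by (simp add: orthonormal3_def inner_add_left dot_cross_self)
  qed
  then obtain N where N: "N \<in> NV V ip" "N (qblock s qone) = - qblock s qone"
    "block_rotation N s (c1 + cross3 c c1) = - (c1 + cross3 c c1)"
    by (rule block_rotation_reversing)
  have "block_rotation N s = half_turn c"
    by (rule form_preserving_half_turn[OF block_rotation(1,2)[OF N(1,2)] bilinear_block_form
          block_form_sym adapted distinct block_rotation(3)[OF N(1,2)] c N(3)])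
  with N(1) show ?thesis
    by (rule that)
qed

text \<open>All half-turns about axes orthogonal to \<open>c1\<close> are realised in \<open>N(V)\<close>, and these only
  permute the norms \<open>|coord u W|\<close>, so \<open>quarter_turn_invariance\<close> applies.\<close>
lemma adapted_frame_transfer:
  fixes t :: 'p
  assumes adapted: "adapted_frame (block_form s) c1 c2 c3"
    and distinct: "block_form s c1 c1 \<noteq> block_form s c2 c2"
  defines "M \<equiv> \<lambda>v. coord t (coord_inv s v)"
  shows "M c1 \<bullet> M c2 = 0" "M c1 \<bullet> M c3 = 0" "M c2 \<bullet> M c3 = 0" "M c2 \<bullet> M c2 = M c3 \<bullet> M c3"
proof -
  have frame: "orthonormal3 c1 c2 c3"
    using adapted by (simp add: adapted_frame_def)
  have lin: "linear M"
    unfolding M_def using linear_compose[OF linear_coord_inv linear_coord] by (simp add: comp_def)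
  have norm_values: "M (half_turn c y) \<bullet> M (half_turn c y) \<in> range (\<lambda>u. coord u (coord_inv s y) \<bullet> coord u (coord_inv s y))"
    if c: "c\<bullet>c = 1" "c\<bullet>c1 = 0" for c y
  proof -
    obtain N where N: "N \<in> NV V ip" "block_rotation N s = half_turn c"
      using adapted_frame_half_turns[OF adapted distinct c] .
    then have "M (half_turn c y) = coord t (induced N (coord_inv s y))"
      by (simp add: M_def block_rotation_def flip: N(2))
    moreover obtain u where "coord t (induced N (coord_inv s y)) \<bullet> coord t (induced N (coord_inv s y)) =
        coord u (coord_inv s y) \<bullet> coord u (coord_inv s y)"
      by (rule norm_coord_induced[OF N(1)])
    ultimately show ?thesis
      by simp
  qed
  have axes: "(cos \<theta> *\<^sub>R c2 + sin \<theta> *\<^sub>R c3) \<bullet> (cos \<theta> *\<^sub>R c2 + sin \<theta> *\<^sub>R c3) = 1"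
    "(cos \<theta> *\<^sub>R c2 + sin \<theta> *\<^sub>R c3) \<bullet> c1 = 0" for \<theta>
    using frame sin_cos_squared_add[of \<theta>]
    by (simp_all add: orthonormal3_def inner_add_left inner_add_right inner_commute power2_eq_square)
  have "\<exists>S. finite S \<and> (\<forall>\<theta>. M (half_turn (cos \<theta> *\<^sub>R c2 + sin \<theta> *\<^sub>R c3) y) \<bullet>
      M (half_turn (cos \<theta> *\<^sub>R c2 + sin \<theta> *\<^sub>R c3) y) \<in> S)" for y
    using norm_values[OF axes] by (intro exI[of _ "range (\<lambda>u. coord u (coord_inv s y) \<bullet> coord u (coord_inv s y))"]) simp
  then show "M c1 \<bullet> M c2 = 0" "M c1 \<bullet> M c3 = 0" "M c2 \<bullet> M c3 = 0" "M c2 \<bullet> M c2 = M c3 \<bullet> M c3"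
    by (rule quarter_turn_invariance[OF lin frame])+
qed

lemma coord_inv_frame_span:
  assumes "orthonormal3 c1 c2 c3"
  shows "\<exists>a b c. Z = a *\<^sub>R coord_inv s c1 + b *\<^sub>R coord_inv s c2 + c *\<^sub>R coord_inv s c3"
proof -
  have "Z = coord_inv s (coord s Z)"
    by simp
  also have "\<dots> = coord_inv s ((coord s Z \<bullet> c1) *\<^sub>R c1 + (coord s Z \<bullet> c2) *\<^sub>R c2 + (coord s Z \<bullet> c3) *\<^sub>R c3)"
    using orthonormal3_expand[OF assms, of "coord s Z"] by simp
  also have "\<dots> = (coord s Z \<bullet> c1) *\<^sub>R coord_inv s c1 + (coord s Z \<bullet> c2) *\<^sub>R coord_inv s c2 +
      (coord s Z \<bullet> c3) *\<^sub>R coord_inv s c3"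
    by (simp only: linear_add[OF linear_coord_inv] linear_cmul[OF linear_coord_inv])
  finally show ?thesis
    by blast
qed

lemma block_form_scalar:
  assumes adapted: "adapted_frame (block_form t) c1 c2 c3"
    and equal: "block_form t c1 c1 = block_form t c2 c2"
  obtains l where "l > 0" "\<And>Z W. ipz Z W = l * (coord t Z \<bullet> coord t W)"
proof
  show "ipz Z W = block_form t c1 c1 * (coord t Z \<bullet> coord t W)" for Z W
    using adapted_frame_form[OF bilinear_block_form block_form_sym adapted, of "coord t Z" "coord t W"] equal
    by (simp add: block_form_def)
  have "c1 \<noteq> 0"
    using adapted by (auto simp: adapted_frame_def orthonormal3_def)
  then show "block_form t c1 c1 > 0"
    unfolding block_form_def by (intro ipz_pos) (simp add: coord_inv_eq_0_iff)
qed

lemma adapted_basis_exists: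
  obtains Z1 Z2 Z3 where
    "ipz Z1 Z2 = 0" "ipz Z1 Z3 = 0" "ipz Z2 Z3 = 0" "ipz Z2 Z2 = ipz Z3 Z3"
    "\<And>t. coord t Z1 \<bullet> coord t Z2 = 0" "\<And>t. coord t Z1 \<bullet> coord t Z3 = 0"
    "\<And>t. coord t Z2 \<bullet> coord t Z3 = 0" "\<And>t. coord t Z2 \<bullet> coord t Z2 = coord t Z3 \<bullet> coord t Z3"
    "\<And>Z. \<exists>a b c. Z = a *\<^sub>R Z1 + b *\<^sub>R Z2 + c *\<^sub>R Z3" "Z1 \<noteq> 0" "Z2 \<noteq> 0"
proof (cases "\<exists>s c1 c2 c3. adapted_frame (block_form s) c1 c2 c3 \<and> block_form s c1 c1 \<noteq> block_form s c2 c2")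
  case True
  then obtain s c1 c2 c3 where adapted: "adapted_frame (block_form s) c1 c2 c3"
    and distinct: "block_form s c1 c1 \<noteq> block_form s c2 c2"
    by blast
  then have frame: "orthonormal3 c1 c2 c3"
    by (simp add: adapted_frame_def)
  then have "c1 \<noteq> 0" "c2 \<noteq> 0"
    by (auto simp: orthonormal3_def)
  with adapted show ?thesis
    using adapted_frame_transfer[OF adapted distinct] coord_inv_frame_span[OF frame]
    by (intro that[of "coord_inv s c1" "coord_inv s c2" "coord_inv s c3"])
       (simp_all add: adapted_frame_def block_form_def coord_inv_eq_0_iff)
next
  case False
  fix s :: 'p
  obtain c1 c2 c3 where adapted: "adapted_frame (block_form s) c1 c2 c3"
    by (rule block_form_adapted_frame)
  then have frame: "orthonormal3 c1 c2 c3"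
    by (simp add: adapted_frame_def)
  then have "c1 \<noteq> 0" "c2 \<noteq> 0"
    by (auto simp: orthonormal3_def)
  define Z1 Z2 Z3 where "Z1 = coord_inv s c1" and "Z2 = coord_inv s c2" and "Z3 = coord_inv s c3"
  have ipz: "ipz Z1 Z2 = 0" "ipz Z1 Z3 = 0" "ipz Z2 Z3 = 0" "ipz Z2 Z2 = ipz Z3 Z3"
    using adapted by (simp_all add: adapted_frame_def block_form_def Z1_def Z2_def Z3_def)
  have "coord t Z1 \<bullet> coord t Z2 = 0 \<and> coord t Z1 \<bullet> coord t Z3 = 0 \<and> coord t Z2 \<bullet> coord t Z3 = 0 \<and>
      coord t Z2 \<bullet> coord t Z2 = coord t Z3 \<bullet> coord t Z3" for t
  proof -
    obtain d1 d2 d3 where d: "adapted_frame (block_form t) d1 d2 d3"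
      by (rule block_form_adapted_frame)
    moreover have "block_form t d1 d1 = block_form t d2 d2"
      using False d by blast
    ultimately obtain l where "l > 0" "\<And>Z W. ipz Z W = l * (coord t Z \<bullet> coord t W)"
      using block_form_scalar by blast
    with ipz show ?thesis
      by simp
  qed
  with ipz show ?thesis
    using coord_inv_frame_span[OF frame] \<open>c1 \<noteq> 0\<close> \<open>c2 \<noteq> 0\<close>
    by (intro that[of Z1 Z2 Z3]) (simp_all add: Z1_def Z2_def Z3_def coord_inv_eq_0_iff)
qed

lemma blockwise_quaternion_normal_form:
  assumes "Z1 \<noteq> 0" "Z2 \<noteq> 0"
    and coords: "\<And>t. coord t Z1 \<bullet> coord t Z2 = 0" "\<And>t. coord t Z1 \<bullet> coord t Z3 = 0"
      "\<And>t. coord t Z2 \<bullet> coord t Z3 = 0" "\<And>t. coord t Z2 \<bullet> coord t Z2 = coord t Z3 \<bullet> coord t Z3"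
  obtains U lam \<mu> where "\<And>s. U s \<bullet> U s = 1" "\<And>s. lam s \<noteq> 0 \<and> \<mu> s \<noteq> 0"
    "\<And>s. qmult (U s) (A s Z1) = qmult (lam s *\<^sub>R qi) (U s)"
    "\<And>s. qmult (U s) (A s Z2) = qmult (\<mu> s *\<^sub>R qj) (U s)"
    "\<And>s. qmult (U s) (A s Z3) = qmult (\<mu> s *\<^sub>R qk) (U s)"
proof -
  have "\<exists>u l m. u\<bullet>u = 1 \<and> l \<noteq> 0 \<and> m \<noteq> 0 \<and> qmult u (A s Z1) = qmult (l *\<^sub>R qi) u \<and>
      qmult u (A s Z2) = qmult (m *\<^sub>R qj) u \<and> qmult u (A s Z3) = qmult (m *\<^sub>R qk) u" for s
  proof -
    have "coord s Z1 \<noteq> 0" "coord s Z2 \<noteq> 0"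
      using assms(1,2) by (simp_all add: coord_eq_0_iff)
    from quaternion_normal_form[OF this coords] obtain u l m where
      "u\<bullet>u = 1" "l \<noteq> 0" "m \<noteq> 0" "qmult u (qpure (coord s Z1)) = qmult (l *\<^sub>R qi) u"
      "qmult u (qpure (coord s Z2)) = qmult (m *\<^sub>R qj) u" "qmult u (qpure (coord s Z3)) = qmult (m *\<^sub>R qk) u" .
    then show ?thesis
      unfolding qpure_coord by blast
  qed
  then show ?thesis
    using that by metis
qed

lemma conjugated_normal_form:
  assumes basis: "\<And>Z. \<exists>a b c. Z = a *\<^sub>R Z1 + b *\<^sub>R Z2 + c *\<^sub>R Z3"
    and unit: "\<And>s. U s \<bullet> U s = 1"
    and turn: "\<And>s. qmult (U s) (A s Z1) = qmult (lam s *\<^sub>R qi) (U s)"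
      "\<And>s. qmult (U s) (A s Z2) = qmult (\<mu> s *\<^sub>R qj) (U s)"
      "\<And>s. qmult (U s) (A s Z3) = qmult (\<mu> s *\<^sub>R qk) (U s)"
  defines "\<Phi> \<equiv> qdiag (\<lambda>s. qmult (U s))"
    and "J1 \<equiv> qdiag (\<lambda>s. Lq (lam s *\<^sub>R qi))"
    and "J2 \<equiv> qdiag (\<lambda>s. Lq (\<mu> s *\<^sub>R qj))"
    and "J3 \<equiv> qdiag (\<lambda>s. Lq (\<mu> s *\<^sub>R qk))"
  shows "{\<Phi> \<circ> K \<circ> inv \<Phi> | K. K \<in> V} = {(\<lambda>x. a *\<^sub>R J1 x + b *\<^sub>R J2 x + c *\<^sub>R J3 x) | a b c. True}"
    and "inv \<Phi> \<circ> J1 \<circ> \<Phi> = Jz Z1" "inv \<Phi> \<circ> J2 \<circ> \<Phi> = Jz Z2" "inv \<Phi> \<circ> J3 \<circ> \<Phi> = Jz Z3"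
proof -
  define J where "J a b c = (\<lambda>x. a *\<^sub>R J1 x + b *\<^sub>R J2 x + c *\<^sub>R J3 x)" for a b c
  have bij: "bij \<Phi>"
    unfolding \<Phi>_def using unit
    by (intro orthogonal_transformation_bij orthogonal_transformation_qdiag orthogonal_transformation_qmult)
  have intertwine: "\<Phi> (Jz (a *\<^sub>R Z1 + b *\<^sub>R Z2 + c *\<^sub>R Z3) x) = J a b c (\<Phi> x)" for a b c x
  proof -
    let ?q = "\<lambda>t. a *\<^sub>R (lam t *\<^sub>R qi) + b *\<^sub>R (\<mu> t *\<^sub>R qj) + c *\<^sub>R (\<mu> t *\<^sub>R qk)"
    have "\<Phi> (Jz (a *\<^sub>R Z1 + b *\<^sub>R Z2 + c *\<^sub>R Z3) x) $ t = J a b c (\<Phi> x) $ t" for t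
    proof -
      have "\<Phi> (Jz (a *\<^sub>R Z1 + b *\<^sub>R Z2 + c *\<^sub>R Z3) x) $ t =
          qmult (qmult (U t) (a *\<^sub>R A t Z1 + b *\<^sub>R A t Z2 + c *\<^sub>R A t Z3)) (x $ t)"
        by (simp add: \<Phi>_def Jz_def Lq_def qmult_assoc linear_add[OF A_linear] linear_cmul[OF A_linear])
      also have "qmult (U t) (a *\<^sub>R A t Z1 + b *\<^sub>R A t Z2 + c *\<^sub>R A t Z3) = qmult (?q t) (U t)"
        by (simp add: qmult_add_right qmult_add_left qmult_scaleR_right qmult_scaleR_left turn)
      also have "qmult (qmult (?q t) (U t)) (x $ t) = J a b c (\<Phi> x) $ t"
        by (simp add: \<Phi>_def J_def J1_def J2_def J3_def Lq_def qmult_assoc qmult_add_left qmult_scaleR_left)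
      finally show ?thesis .
    qed
    then show ?thesis
      by (simp add: vec_eq_iff)
  qed
  have conj: "\<Phi> \<circ> Jz (a *\<^sub>R Z1 + b *\<^sub>R Z2 + c *\<^sub>R Z3) \<circ> inv \<Phi> = J a b c"
    "inv \<Phi> \<circ> J a b c \<circ> \<Phi> = Jz (a *\<^sub>R Z1 + b *\<^sub>R Z2 + c *\<^sub>R Z3)" for a b c
    using conjugate_eqI[of \<Phi> "Jz (a *\<^sub>R Z1 + b *\<^sub>R Z2 + c *\<^sub>R Z3)" "J a b c"] bij intertwine
    by auto
  have "J1 = J 1 0 0" "J2 = J 0 1 0" "J3 = J 0 0 1"
    by (simp_all add: J_def)
  then show "inv \<Phi> \<circ> J1 \<circ> \<Phi> = Jz Z1" "inv \<Phi> \<circ> J2 \<circ> \<Phi> = Jz Z2" "inv \<Phi> \<circ> J3 \<circ> \<Phi> = Jz Z3"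
    using conj(2)[of 1 0 0] conj(2)[of 0 1 0] conj(2)[of 0 0 1] by simp_all
  show "{\<Phi> \<circ> K \<circ> inv \<Phi> | K. K \<in> V} = {J a b c | a b c. True}"
  proof (intro equalityI subsetI)
    fix F assume "F \<in> {\<Phi> \<circ> K \<circ> inv \<Phi> | K. K \<in> V}"
    then obtain Z where F: "F = \<Phi> \<circ> Jz Z \<circ> inv \<Phi>"
      by (auto simp: Jz_def)
    obtain a b c where "Z = a *\<^sub>R Z1 + b *\<^sub>R Z2 + c *\<^sub>R Z3"
      using basis by blast
    then show "F \<in> {J a b c | a b c. True}"
      using F conj(1) by blast
  next
    fix F assume "F \<in> {J a b c | a b c. True}"
    then obtain a b c where "F = \<Phi> \<circ> Jz (a *\<^sub>R Z1 + b *\<^sub>R Z2 + c *\<^sub>R Z3) \<circ> inv \<Phi>"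
      using conj(1) by auto
    then show "F \<in> {\<Phi> \<circ> K \<circ> inv \<Phi> | K. K \<in> V}"
      using Jz_in_V by blast
  qed
qed

end

theorem mainTheorem9:
  fixes A :: "'p::finite \<Rightarrow> 'z::euclidean_space \<Rightarrow> real^4"
    and ip :: "(real^4^'p \<Rightarrow> real^4^'p) \<Rightarrow> (real^4^'p \<Rightarrow> real^4^'p) \<Rightarrow> real"
  assumes dimz: "DIM('z) = 3"
    and A_lin: "\<And>s. linear (A s)"
    and A_inj: "\<And>s. inj (A s)"
    and A_onto: "\<And>s. range (A s) = ImH"
    and ip: "inner_product_on {qdiag (\<lambda>s. Lq (A s Z)) | Z. True} ip"
    and ws: "WS_pair {qdiag (\<lambda>s. Lq (A s Z)) | Z. True} ip"
  shows "\<exists>\<phi> :: 'p \<Rightarrow> real^4 \<Rightarrow> real^4. \<exists>lam \<mu> :: 'p \<Rightarrow> real.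
     (\<forall>s. orthogonal_transformation (\<phi> s) \<and> (\<forall>x q. \<phi> s (qmult x q) = qmult (\<phi> s x) q)) \<and>
     (\<forall>s. lam s \<noteq> 0 \<and> \<mu> s \<noteq> 0) \<and>
     (let \<Phi> = qdiag \<phi>;
          J1 = qdiag (\<lambda>s. Lq (lam s *\<^sub>R qi));
          J2 = qdiag (\<lambda>s. Lq (\<mu> s *\<^sub>R qj));
          J3 = qdiag (\<lambda>s. Lq (\<mu> s *\<^sub>R qk));
          ip' = (\<lambda>J K. ip (inv \<Phi> \<circ> J \<circ> \<Phi>) (inv \<Phi> \<circ> K \<circ> \<Phi>))
      in {\<Phi> \<circ> K \<circ> inv \<Phi> | K. K \<in> {qdiag (\<lambda>s. Lq (A s Z)) | Z. True}}
           = {(\<lambda>x. a *\<^sub>R J1 x + b *\<^sub>R J2 x + c *\<^sub>R J3 x) | a b c. True} \<and>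
         ip' J1 J2 = 0 \<and> ip' J1 J3 = 0 \<and> ip' J2 J3 = 0 \<and> ip' J2 J2 = ip' J3 J3)"
proof -
  interpret quaternionic_ws_pair A ip
    using A_lin A_inj A_onto ip ws by (simp add: quaternionic_ws_pair_def)
  obtain Z1 Z2 Z3 where ipz: "ipz Z1 Z2 = 0" "ipz Z1 Z3 = 0" "ipz Z2 Z3 = 0" "ipz Z2 Z2 = ipz Z3 Z3"
    and coords: "\<And>t. coord t Z1 \<bullet> coord t Z2 = 0" "\<And>t. coord t Z1 \<bullet> coord t Z3 = 0"
      "\<And>t. coord t Z2 \<bullet> coord t Z3 = 0" "\<And>t. coord t Z2 \<bullet> coord t Z2 = coord t Z3 \<bullet> coord t Z3"
    and basis: "\<And>Z. \<exists>a b c. Z = a *\<^sub>R Z1 + b *\<^sub>R Z2 + c *\<^sub>R Z3" and "Z1 \<noteq> 0" "Z2 \<noteq> 0"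
    by (fact adapted_basis_exists)
  obtain U lam \<mu> where U: "\<And>s. U s \<bullet> U s = 1" "\<And>s. lam s \<noteq> 0 \<and> \<mu> s \<noteq> 0"
    and turn: "\<And>s. qmult (U s) (A s Z1) = qmult (lam s *\<^sub>R qi) (U s)"
      "\<And>s. qmult (U s) (A s Z2) = qmult (\<mu> s *\<^sub>R qj) (U s)"
      "\<And>s. qmult (U s) (A s Z3) = qmult (\<mu> s *\<^sub>R qk) (U s)"
    by (fact blockwise_quaternion_normal_form[OF \<open>Z1 \<noteq> 0\<close> \<open>Z2 \<noteq> 0\<close> coords])
  note normal_form = conjugated_normal_form[OF basis U(1) turn]
  show ?thesis
    using U normal_form ipz
    by (intro exI[of _ "\<lambda>s. qmult (U s)"] exI[of _ lam] exI[of _ \<mu>])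
       (simp add: Let_def orthogonal_transformation_qmult qmult_assoc ipz_def)
qed

end
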